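(* Fix constants $\beta_\text{m}>0$, $\beta_\text{I}>0$, a target threshold $\gamma_\text{t}>0$, LoS probabilities $p_\text{L}(\theta_\text{m}),p_\text{L}(\theta_\text{I})\in[0,1]$ and Rician factors $K_\text{m}=K_\text{m}(\theta_\text{m})>0$, $K_\text{I}=K_\text{I}(\theta_\text{I})>0$. Let $h_\text{m},h_\text{I}$ be independent fading gains distributed as in the context (each link is independently LoS with probability $p_\text{L}(\theta_i)$ and NLoS otherwise), and let $\gamma=\frac{h_\text{m}\beta_\text{m}}{h_\text{I}\beta_\text{I}}$. Then the outage probability $p_\text{o}=\mathbb{P}[\gamma<\gamma_\text{t}]$ equals $$p_\text{o}=p_\text{L}(\theta_\text{m})p_\text{L}(\theta_\text{I})\,p_\text{o}^{(\text{L,L})}+p_\text{L}(\theta_\text{m})(1-p_\text{L}(\theta_\text{I}))\,p_\text{o}^{(\text{L,N})}+(1-p_\text{L}(\theta_\text{m}))p_\text{L}(\theta_\text{I})\,p_\text{o}^{(\text{N,L})}+(1-p_\text{L}(\theta_\text{m}))(1-p_\text{L}(\theta_\text{I}))\,p_\text{o}^{(\text{N,N})},$$ where $p_\text{o}^{(e_\text{m},e_\text{I})}=\mathbb{P}[\gamma<\gamma_\text{t}\mid \text{main link in environment } e_\text{m},\ \text{interference link in environment } e_\text{I}]$ is given by: (1) both LoS: $$p_\text{o}^{(\text{L,L})}=1-Q\!\left(\sqrt{\frac{2K_\text{m}\beta_\text{m}}{\beta_\text{m}+\gamma_\text{t}\beta_\text{I}}},\sqrt{\frac{2\gamma_\text{t}K_\text{I}\beta_\text{I}}{\beta_\text{m}+\gamma_\text{t}\beta_\text{I}}}\right)+\frac{\gamma_\text{t}\beta_\text{I}}{\beta_\text{m}+\gamma_\text{t}\beta_\text{I}}\exp\!\left(-\frac{K_\text{m}\beta_\text{m}+\gamma_\text{t}K_\text{I}\beta_\text{I}}{\beta_\text{m}+\gamma_\text{t}\beta_\text{I}}\right)I_0\!\left(\frac{2\beta_\text{m}}{\beta_\text{m}+\gamma_\text{t}\beta_\text{I}}\sqrt{\frac{\gamma_\text{t}K_\text{m}K_\text{I}\beta_\text{I}}{\beta_\text{m}}}\right);$$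 (2) main LoS, interference NLoS: $$p_\text{o}^{(\text{L,N})}=\frac{\gamma_\text{t}\beta_\text{I}}{2\beta_\text{m}+\gamma_\text{t}\beta_\text{I}}\exp\!\left(-\frac{2K_\text{m}\beta_\text{m}}{2\beta_\text{m}+\gamma_\text{t}\beta_\text{I}}\right);$$ (3) main NLoS, interference LoS: $$p_\text{o}^{(\text{N,L})}=1-\frac{\beta_\text{m}}{2\gamma_\text{t}\beta_\text{I}+\beta_\text{m}}\exp\!\left(-\frac{2\gamma_\text{t}K_\text{I}\beta_\text{I}}{2\gamma_\text{t}\beta_\text{I}+\beta_\text{m}}\right);$$ (4) both NLoS: $$p_\text{o}^{(\text{N,N})}=\frac{\gamma_\text{t}\beta_\text{I}}{\beta_\text{m}+\gamma_\text{t}\beta_\text{I}}.$$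
   Context: Model: a receiver gets a desired signal over the main link (index m) and an interfering signal over the interference link (index I). For $i\in\{\text{m},\text{I}\}$, $\beta_i=\ell_i^{-\alpha_i(\theta_i)}P_i>0$ is the average received power (link distance $\ell_i$, path-loss exponent $\alpha_i(\theta_i)$, transmit power $P_i$), and $\theta_i$ is the elevation angle of link $i$. The signal-to-interference ratio is $\gamma=\frac{h_\text{m}\beta_\text{m}}{h_\text{I}\beta_\text{I}}$, where $h_\text{m},h_\text{I}$ are independent random fading gains. Each link $i$ is, independently, in a LoS environment with probability $p_\text{L}(\theta_i)$ (in the paper $p_\text{L}(\theta)=\frac{1}{1+a_1\exp\{-b_1(\theta-a_1)\}}$) and in an NLoS environment with probability $1-p_\text{L}(\theta_i)$. Given LoS, $h_i$ has density $f_\text{L}(h)=\frac12\exp\!\left(-K_i-\frac h2\right)I_0\!\left(\sqrt{2K_ih}\right)$, $h\ge0$ (noncentral chi-squared with 2 degrees of freedom and noncentrality $2K_i$), where $K_i=K_i(\theta_i)>0$ is the Rician factor (in the paper $K(\theta)=a_3\exp(b_3\theta)$). Given NLoS, $h_i$ has density $f_\text{N}(h)=e^{-h}$, $h\ge0$. $I_0$ is the modified Bessel function of the first kind of order zero, and $Q(a,b)=\int_b^\infty x\exp\!\left(-\frac{x^2+a^2}{2}\right)I_0(ax)\,dx$ is the first-order Marcum Q-function. *)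

theory Defs
  imports "HOL-Probability.Probability"
begin

definition besselI0 :: "real \<Rightarrow> real" where
  "besselI0 x = (\<Sum>n. (x\<^sup>2 / 4) ^ n / (fact n)\<^sup>2)"

definition marcumQ :: "real \<Rightarrow> real \<Rightarrow> real" where
  "marcumQ a b = (LINT x:{b..}|lborel. x * exp (- (x\<^sup>2 + a\<^sup>2) / 2) * besselI0 (a * x))"

text \<open>LoS fading density (noncentral chi-squared, 2 dof, noncentrality 2K), zero for h < 0.\<close>
definition fLoS :: "real \<Rightarrow> real \<Rightarrow> real" where
  "fLoS K h = (if 0 \<le> h then 1/2 * exp (- K - h / 2) * besselI0 (sqrt (2 * K * h)) else 0)"

definition fNLoS :: "real \<Rightarrow> real" where
  "fNLoS h = (if 0 \<le> h then exp (- h) else 0)"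

definition po_LL :: "real \<Rightarrow> real \<Rightarrow> real \<Rightarrow> real \<Rightarrow> real \<Rightarrow> real" where
  "po_LL bm bI gt Km KI =
     1 - marcumQ (sqrt (2 * Km * bm / (bm + gt * bI))) (sqrt (2 * gt * KI * bI / (bm + gt * bI)))
     + gt * bI / (bm + gt * bI) * exp (- (Km * bm + gt * KI * bI) / (bm + gt * bI))
       * besselI0 (2 * bm / (bm + gt * bI) * sqrt (gt * Km * KI * bI / bm))"

definition po_LN :: "real \<Rightarrow> real \<Rightarrow> real \<Rightarrow> real \<Rightarrow> real" where
  "po_LN bm bI gt Km = gt * bI / (2 * bm + gt * bI) * exp (- (2 * Km * bm) / (2 * bm + gt * bI))"

definition po_NL :: "real \<Rightarrow> real \<Rightarrow> real \<Rightarrow> real \<Rightarrow> real" where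
  "po_NL bm bI gt KI = 1 - bm / (2 * gt * bI + bm) * exp (- (2 * gt * KI * bI) / (2 * gt * bI + bm))"

definition po_NN :: "real \<Rightarrow> real \<Rightarrow> real \<Rightarrow> real" where
  "po_NN bm bI gt = gt * bI / (bm + gt * bI)"

end

theory Submission
  imports Defs "HOL-Real_Asymp.Real_Asymp"
begin

text \<open>
  Both fading laws are Poisson mixtures of Erlang laws: the noncentral chi-squared law with
  noncentrality \<open>2K\<close> mixes the Erlang densities of rate \<open>1/2\<close> with Poisson(\<open>K\<close>) weights,
  and the exponential law is the degenerate mixture with \<open>K = 0\<close> and rate \<open>1\<close>.
  For two such mixtures the outage event is, term by term, a comparison of two Erlang
  variables, whose probability is a negative binomial sum. Binomial thinning of the two
  Poisson indices turns the resulting double series into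
  \<open>\<Sum>\<^sub>k \<Sum>\<^sub>j Pois(\<alpha>)(k) Pois(\<beta>)(j) w(k,j)\<close> with \<open>w(k,j) = 1, q, 0\<close> according as \<open>k < j\<close>,
  \<open>k = j\<close>, \<open>k > j\<close>; here \<open>r\<^sub>m, r\<^sub>I\<close> are the Erlang rates,
  \<open>q = r\<^sub>m / (r\<^sub>m + r\<^sub>I \<beta>\<^sub>m / (\<gamma>\<^sub>t \<beta>\<^sub>I))\<close>, \<open>\<alpha> = K\<^sub>m (1 - q)\<close> and \<open>\<beta> = K\<^sub>I q\<close>.
  The Poisson series of the Marcum Q-function identifies this with
  \<open>1 - Q(\<surd>(2\<alpha>), \<surd>(2\<beta>)) + q exp(-\<alpha>-\<beta>) I\<^sub>0(2\<surd>(\<alpha>\<beta>))\<close>, which specialises to the four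
  environment combinations; independence of the two links splits the outage event along them.
\<close>

section \<open>Poisson and binomial weights\<close>

definition poisson_weight :: "real \<Rightarrow> nat \<Rightarrow> real" where
  "poisson_weight K n = exp (- K) * K ^ n / fact n"

definition binomial_weight :: "nat \<Rightarrow> real \<Rightarrow> nat \<Rightarrow> real" where
  "binomial_weight n r k = real (n choose k) * r ^ k * (1 - r) ^ (n - k)"

definition order_weight :: "real \<Rightarrow> nat \<Rightarrow> nat \<Rightarrow> real" where
  "order_weight q k j = (if k < j then 1 else if k = j then q else 0)"

lemma poisson_weight_measurable[measurable]: "(\<lambda>K. poisson_weight K n) \<in> borel_measurable borel"
  unfolding poisson_weight_def by measurable

lemma poisson_weight_nonneg: "0 \<le> K \<Longrightarrow> 0 \<le> poisson_weight K n"
  by (simp add: poisson_weight_def)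

lemma poisson_weight_0: "poisson_weight 0 n = (if n = 0 then 1 else 0)"
  by (simp add: poisson_weight_def)

lemma binomial_weight_nonneg: "0 \<le> r \<Longrightarrow> r \<le> 1 \<Longrightarrow> 0 \<le> binomial_weight n r k"
  by (simp add: binomial_weight_def)

lemma binomial_weight_eq_0: "n < k \<Longrightarrow> binomial_weight n r k = 0"
  by (simp add: binomial_weight_def)

lemma order_weight_nonneg: "0 \<le> q \<Longrightarrow> 0 \<le> order_weight q k j"
  by (simp add: order_weight_def)

lemma poisson_weight_sums: "poisson_weight K sums 1"
proof -
  have "(\<lambda>n. exp (-K) * (K ^ n /\<^sub>R fact n)) sums (exp (-K) * exp K)"
    by (intro sums_mult exp_converges)
  moreover have "(\<lambda>n. exp (-K) * (K ^ n /\<^sub>R fact n)) = poisson_weight K"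
    by (rule ext) (simp add: poisson_weight_def divide_inverse ac_simps)
  ultimately show ?thesis by (simp add: mult_exp_exp)
qed

lemma summable_poisson_weight: "summable (poisson_weight K)"
  using poisson_weight_sums sums_summable by blast

lemma sum_poisson_weight_le_1: "0 \<le> K \<Longrightarrow> (\<Sum>j\<le>k. poisson_weight K j) \<le> 1"
  using sum_le_suminf[OF summable_poisson_weight, of "{..k}" K] poisson_weight_sums[of K]
  by (simp add: sums_iff poisson_weight_nonneg)

lemma suminf_poisson_weight_0: "(\<Sum>k. poisson_weight 0 k * f k) = f 0"
proof -
  have "(\<Sum>k. poisson_weight 0 k * f k) = (\<Sum>k\<in>{0}. poisson_weight 0 k * f k)"
    by (rule suminf_finite) (auto simp: poisson_weight_0)
  then show ?thesis by (simp add: poisson_weight_0)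
qed

lemma poisson_thinning:
  assumes "0 \<le> K" "0 \<le> r" "r \<le> 1"
  shows "(\<lambda>n. poisson_weight K n * binomial_weight n r k) sums poisson_weight (K * r) k"
proof -
  have eq: "poisson_weight K (l + k) * binomial_weight (l + k) r k
      = (exp (-K) * (K * r) ^ k / fact k) * ((K * (1 - r)) ^ l /\<^sub>R fact l)" for l
  proof -
    have "real (l + k choose k) = fact (l + k) / (fact k * fact l)"
      by (subst binomial_fact) auto
    moreover have "(K * (1 - r)) ^ l = K ^ l * (1 - r) ^ l" by (rule power_mult_distrib)
    ultimately show ?thesis
      unfolding poisson_weight_def binomial_weight_def by (simp add: power_add field_simps)
  qed
  have "(\<lambda>l. (exp (-K) * (K * r) ^ k / fact k) * ((K * (1 - r)) ^ l /\<^sub>R fact l))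
      sums ((exp (-K) * (K * r) ^ k / fact k) * exp (K * (1 - r)))"
    by (intro sums_mult exp_converges)
  moreover have "(exp (-K) * (K * r) ^ k / fact k) * exp (K * (1 - r)) = poisson_weight (K * r) k"
    by (simp add: poisson_weight_def mult_exp_exp algebra_simps)
  ultimately have "(\<lambda>l. poisson_weight K (l + k) * binomial_weight (l + k) r k) sums poisson_weight (K * r) k"
    unfolding eq by simp
  then show ?thesis
    by (subst (asm) sums_iff_shift) (simp add: binomial_weight_eq_0)
qed

lemma poisson_thinning_ennreal:
  assumes "0 \<le> K" "0 \<le> r" "r \<le> 1"
  shows "(\<Sum>n. ennreal (poisson_weight K n * binomial_weight n r k)) = ennreal (poisson_weight (K * r) k)"
proof -
  have "(\<lambda>n. ennreal (poisson_weight K n * binomial_weight n r k)) sums ennreal (poisson_weight (K * r) k)"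
    using poisson_thinning[OF assms, of k] assms
    by (subst sums_ennreal) (auto intro!: mult_nonneg_nonneg poisson_weight_nonneg binomial_weight_nonneg)
  then show ?thesis by (rule sums_unique[symmetric])
qed

lemma binomial_weight_Suc_0: "binomial_weight (Suc n) q 0 = (1 - q) * binomial_weight n q 0"
  by (simp add: binomial_weight_def)

lemma binomial_weight_Suc_Suc:
  "binomial_weight (Suc n) q (Suc k) = (1 - q) * binomial_weight n q (Suc k) + q * binomial_weight n q k"
proof (cases "Suc k \<le> n")
  case True
  then have "Suc n - Suc k = Suc (n - Suc k)" "n - k = Suc (n - Suc k)" by auto
  with True show ?thesis by (simp add: binomial_weight_def algebra_simps)
next
  case False
  then have "k = n \<or> n < k" by auto
  then show ?thesis by (auto simp: binomial_weight_def binomial_eq_0)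
qed

lemma binomial_weight_Suc:
  "binomial_weight (Suc n) q k
     = (1 - q) * binomial_weight n q k + (if k = 0 then 0 else q * binomial_weight n q (k - 1))"
  by (cases k) (auto simp: binomial_weight_Suc_Suc binomial_weight_Suc_0)

lemma binomial_weight_mult_binomial_weight:
  assumes "k \<le> m"
  shows "binomial_weight m (1 - q) k * binomial_weight n q k
       = q ^ m * (1 - q) ^ n * real ((m choose k) * (n choose k))"
proof (cases "k \<le> n")
  case True
  have "q ^ (m - k) * q ^ k = q ^ m" "(1 - q) ^ k * (1 - q) ^ (n - k) = (1 - q) ^ n"
    using True assms by (simp_all add: power_add[symmetric])
  then show ?thesis by (simp add: binomial_weight_def algebra_simps)
qed (simp add: binomial_weight_def)

lemma sum_choose_mult_choose: "(\<Sum>k\<le>m. (m choose k) * (n choose k)) = (m + n) choose m"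
proof -
  have "(\<Sum>k\<le>m. (m choose k) * (n choose k)) = (\<Sum>k\<le>m. (m choose (m - k)) * (n choose k))"
    by (rule sum.cong; simp add: binomial_symmetric[symmetric])
  also have "\<dots> = (\<Sum>k\<le>m. (m choose k) * (n choose (m - k)))"
    by (rule sum.reindex_bij_witness[of _ "\<lambda>k. m - k" "\<lambda>k. m - k"]) auto
  also have "\<dots> = (m + n) choose m" by (rule vandermonde)
  finally show ?thesis .
qed

definition binomial_order_weight :: "real \<Rightarrow> nat \<Rightarrow> nat \<Rightarrow> real" where
  "binomial_order_weight q k n = (\<Sum>j\<le>n. binomial_weight n q j * order_weight q k j)"

lemma binomial_order_weight_0: "binomial_order_weight q k 0 = (if k = 0 then q else 0)"
  by (simp add: binomial_order_weight_def binomial_weight_def order_weight_def)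

lemma binomial_order_weight_Suc:
  "binomial_order_weight q k (Suc n) = binomial_order_weight q k n + q * binomial_weight (Suc n) q k"
proof -
  let ?B = "binomial_weight n q" and ?W = "order_weight q k"
  have W_Suc: "?W (Suc j) = ?W j + (if k = j then 1 - q else 0) + (if k = Suc j then q else 0)" for j
    by (auto simp: order_weight_def)
  have "binomial_order_weight q k (Suc n)
      = binomial_weight (Suc n) q 0 * ?W 0 + (\<Sum>j\<le>n. binomial_weight (Suc n) q (Suc j) * ?W (Suc j))"
    unfolding binomial_order_weight_def by (rule sum.atMost_Suc_shift)
  also have "\<dots> = (1 - q) * ?B 0 * ?W 0 + (\<Sum>j\<le>n. (1 - q) * ?B (Suc j) * ?W (Suc j))
      + (\<Sum>j\<le>n. q * ?B j * ?W (Suc j))"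
    unfolding binomial_weight_Suc_Suc binomial_weight_Suc_0 add.assoc sum.distrib[symmetric]
    by (simp add: algebra_simps)
  also have "(1 - q) * ?B 0 * ?W 0 + (\<Sum>j\<le>n. (1 - q) * ?B (Suc j) * ?W (Suc j))
      = (\<Sum>j\<le>Suc n. (1 - q) * ?B j * ?W j)"
    by (rule sum.atMost_Suc_shift[symmetric])
  also have "\<dots> = (1 - q) * binomial_order_weight q k n"
    by (simp add: binomial_order_weight_def binomial_weight_eq_0 sum_distrib_left mult.assoc)
  also have "(\<Sum>j\<le>n. q * ?B j * ?W (Suc j))
      = q * binomial_order_weight q k n + q * (\<Sum>j\<le>n. ?B j * (if k = j then 1 - q else 0))
          + q * (\<Sum>j\<le>n. ?B j * (if k = Suc j then q else 0))"
    by (simp add: W_Suc binomial_order_weight_def sum.distrib sum_distrib_left algebra_simps)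
  also have "(\<Sum>j\<le>n. ?B j * (if k = j then 1 - q else 0)) = (1 - q) * ?B k"
    by (cases "k \<le> n")
      (auto simp: binomial_weight_eq_0 if_distrib[of "\<lambda>x. ?B _ * x"] sum.delta' cong: if_cong)
  also have "(\<Sum>j\<le>n. ?B j * (if k = Suc j then q else 0)) = (if k = 0 then 0 else q * ?B (k - 1))"
  proof (cases k)
    case (Suc k')
    have "(\<Sum>j\<le>n. ?B j * (if k = Suc j then q else 0)) = (\<Sum>j\<le>n. if j = k' then ?B j * q else 0)"
      using Suc by (intro sum.cong) auto
    also have "\<dots> = q * ?B k'"
      by (cases "k' \<le> n") (auto simp: binomial_weight_eq_0)
    finally show ?thesis using Suc by simp
  qed simp
  finally show ?thesis
    unfolding binomial_weight_Suc[of n q k] by (simp add: algebra_simps)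
qed

text \<open>
  The left-hand side is the probability of at most \<open>n\<close> failures before the \<open>(m+1)\<close>-th
  success of a \<open>q\<close>-coin.
\<close>

lemma negative_binomial_sum_eq_binomial_order_sum:
  "(\<Sum>i\<le>n. real (m + i choose i) * q ^ Suc m * (1 - q) ^ i)
     = (\<Sum>k\<le>m. binomial_weight m (1 - q) k * binomial_order_weight q k n)"
proof (induction n)
  case 0
  have "(\<Sum>k\<le>m. binomial_weight m (1 - q) k * binomial_order_weight q k 0) = binomial_weight m (1 - q) 0 * q"
    unfolding binomial_order_weight_0
    by (simp add: if_distrib[of "\<lambda>x. _ * x"] sum.delta cong: if_cong)
  then show ?case by (simp add: binomial_weight_def)
next
  case (Suc n)
  have vandermonde_Suc: "(\<Sum>k\<le>m. (m choose k) * (Suc n choose k)) = (m + n choose n) + (m + n choose Suc n)"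
  proof -
    have "Suc (m + n) choose m = Suc (m + n) choose Suc n"
      using binomial_symmetric[of m "Suc (m + n)"] by simp
    then show ?thesis
      using sum_choose_mult_choose[of m "Suc n"] binomial_Suc_Suc[of "m + n" n]
      by (simp del: binomial_Suc_Suc)
  qed
  have "(\<Sum>k\<le>m. binomial_weight m (1 - q) k * binomial_order_weight q k (Suc n))
      = (\<Sum>k\<le>m. binomial_weight m (1 - q) k * binomial_order_weight q k n)
        + q * (\<Sum>k\<le>m. binomial_weight m (1 - q) k * binomial_weight (Suc n) q k)"
    by (simp add: binomial_order_weight_Suc sum.distrib sum_distrib_left algebra_simps)
  also have "(\<Sum>k\<le>m. binomial_weight m (1 - q) k * binomial_weight (Suc n) q k)
      = q ^ m * (1 - q) ^ Suc n * real (\<Sum>k\<le>m. (m choose k) * (Suc n choose k))"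
    by (simp add: binomial_weight_mult_binomial_weight sum_distrib_left)
  finally show ?case
    using Suc by (simp add: vandermonde_Suc algebra_simps)
qed

section \<open>Poisson mixtures of Erlang densities\<close>

definition erlang_mixture :: "real \<Rightarrow> real \<Rightarrow> real \<Rightarrow> real" where
  "erlang_mixture K r h = (\<Sum>n. poisson_weight K n * erlang_density n r h)"

lemma summable_bessel_series: "summable (\<lambda>n. x ^ n / (fact n)\<^sup>2 :: real)"
proof (rule summable_comparison_test[OF _ summable_exp[of "\<bar>x\<bar>"]])
  have "\<bar>x\<bar> ^ n / (fact n)\<^sup>2 \<le> \<bar>x\<bar> ^ n / fact n" for n
    by (intro divide_left_mono) (auto simp: power2_eq_square)
  then show "\<exists>N. \<forall>n\<ge>N. norm (x ^ n / (fact n)\<^sup>2) \<le> inverse (fact n) * \<bar>x\<bar> ^ n"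
    by (simp add: abs_mult power_abs divide_inverse mult.commute)
qed

lemma besselI0_nonneg: "0 \<le> besselI0 x"
  unfolding besselI0_def by (intro suminf_nonneg summable_bessel_series) simp

lemma besselI0_measurable[measurable]: "besselI0 \<in> borel_measurable borel"
  unfolding besselI0_def[abs_def] by measurable

lemma poisson_weight_mult_erlang_density:
  "0 \<le> h \<Longrightarrow> poisson_weight K n * erlang_density n r h
     = (exp (- K) * r * exp (- r * h)) * ((K * r * h) ^ n / (fact n)\<^sup>2)"
  by (simp add: poisson_weight_def erlang_density_def power2_eq_square power_mult_distrib)

lemma summable_erlang_mixture: "summable (\<lambda>n. poisson_weight K n * erlang_density n r h)"
proof (cases "0 \<le> h")
  case True
  then show ?thesis
    unfolding poisson_weight_mult_erlang_density[OF True]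
    by (intro summable_mult summable_bessel_series)
qed (simp add: erlang_density_def)

lemma erlang_mixture_neg: "h < 0 \<Longrightarrow> erlang_mixture K r h = 0"
  by (simp add: erlang_mixture_def erlang_density_def)

lemma erlang_mixture_ennreal:
  "0 \<le> K \<Longrightarrow> 0 \<le> r \<Longrightarrow>
     ennreal (erlang_mixture K r h) = (\<Sum>n. ennreal (poisson_weight K n) * ennreal (erlang_density n r h))"
proof -
  assume "0 \<le> K" "0 \<le> r"
  then have "ennreal (erlang_mixture K r h) = (\<Sum>n. ennreal (poisson_weight K n * erlang_density n r h))"
    unfolding erlang_mixture_def
    by (intro suminf_ennreal2[symmetric] summable_erlang_mixture mult_nonneg_nonneg poisson_weight_nonneg) auto
  with \<open>0 \<le> K\<close> \<open>0 \<le> r\<close> show ?thesis by (simp add: ennreal_mult poisson_weight_nonneg)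
qed

lemma fLoS_eq_erlang_mixture: "0 \<le> K \<Longrightarrow> fLoS K = erlang_mixture K (1/2)"
proof
  fix h assume K: "0 \<le> K"
  show "fLoS K h = erlang_mixture K (1/2) h"
  proof (cases "0 \<le> h")
    case True
    let ?c = "exp (- K) * (1/2) * exp (- (1/2) * h)"
    have "erlang_mixture K (1/2) h = (\<Sum>n. ?c * ((K * (1/2) * h) ^ n / (fact n)\<^sup>2))"
      unfolding erlang_mixture_def poisson_weight_mult_erlang_density[OF True] ..
    also have "\<dots> = ?c * besselI0 (sqrt (2 * K * h))"
      unfolding suminf_mult[OF summable_bessel_series] besselI0_def using True K by simp
    finally show ?thesis using True by (simp add: fLoS_def mult_exp_exp algebra_simps)
  qed (simp add: fLoS_def erlang_mixture_neg)
qed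

lemma fNLoS_eq_erlang_mixture: "fNLoS = erlang_mixture 0 1"
proof
  fix h
  have "erlang_mixture 0 1 h = (\<Sum>n\<in>{0}. poisson_weight 0 n * erlang_density n 1 h)"
    unfolding erlang_mixture_def by (rule suminf_finite) (auto simp: poisson_weight_0)
  then show "fNLoS h = erlang_mixture 0 1 h"
    by (simp add: poisson_weight_0 erlang_density_def fNLoS_def)
qed

lemma fLoS_nonneg: "0 \<le> K \<Longrightarrow> 0 \<le> fLoS K h"
  by (simp add: fLoS_def besselI0_nonneg)

lemma fNLoS_nonneg: "0 \<le> fNLoS h"
  by (simp add: fNLoS_def)

lemma fLoS_measurable[measurable]: "fLoS K \<in> borel_measurable borel"
  unfolding fLoS_def[abs_def] by measurable

lemma fNLoS_measurable[measurable]: "fNLoS \<in> borel_measurable borel"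
  unfolding fNLoS_def[abs_def] by measurable

lemma nn_integral_erlang_density_1: "0 < r \<Longrightarrow> (\<integral>\<^sup>+x. ennreal (erlang_density n r x) \<partial>lborel) = 1"
  using nn_integral_erlang_ith_moment[of r n 0] by simp

lemma nn_integral_erlang_density_tail:
  assumes r: "0 < r" and t: "0 \<le> t"
  shows "(\<integral>\<^sup>+x. ennreal (erlang_density n r x) * indicator {t<..} x \<partial>lborel)
       = ennreal (\<Sum>i\<le>n. poisson_weight (r * t) i)"
proof -
  let ?S = "\<Sum>i\<le>n. poisson_weight (r * t) i"
  have cdf: "erlang_CDF n r t = 1 - ?S"
    using t by (simp add: erlang_CDF_def poisson_weight_def mult_ac)
  have S0: "0 \<le> ?S" and S1: "?S \<le> 1"
    using r t sum_poisson_weight_le_1[of "r * t" n] by (auto intro!: sum_nonneg poisson_weight_nonneg)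
  have "ennreal (1 - ?S) + ennreal ?S = (\<integral>\<^sup>+x. ennreal (erlang_density n r x) \<partial>lborel)"
    using S0 S1 nn_integral_erlang_density_1[OF r] by (simp flip: ennreal_plus)
  also have "\<dots> = (\<integral>\<^sup>+x. ennreal (erlang_density n r x) * indicator {.. t} x
      + ennreal (erlang_density n r x) * indicator {t<..} x \<partial>lborel)"
    by (intro nn_integral_cong) (auto split: split_indicator)
  also have "\<dots> = ennreal (1 - ?S)
      + (\<integral>\<^sup>+x. ennreal (erlang_density n r x) * indicator {t<..} x \<partial>lborel)"
    by (subst nn_integral_add) (auto simp: nn_integral_erlang_density[OF r] cdf)
  finally show ?thesis by (simp add: ennreal_add_left_cancel)
qed

lemma nn_integral_erlang_mixture_tail:
  assumes K: "0 \<le> K" and r: "0 < r" and t: "0 \<le> t"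
  shows "(\<integral>\<^sup>+x. ennreal (erlang_mixture K r x) * indicator {t<..} x \<partial>lborel)
       = (\<Sum>n. ennreal (poisson_weight K n * (\<Sum>i\<le>n. poisson_weight (r * t) i)))"
proof -
  have "(\<integral>\<^sup>+x. ennreal (erlang_mixture K r x) * indicator {t<..} x \<partial>lborel)
      = (\<integral>\<^sup>+x. (\<Sum>n. ennreal (poisson_weight K n) * (ennreal (erlang_density n r x) * indicator {t<..} x)) \<partial>lborel)"
    using K r by (simp add: erlang_mixture_ennreal mult.assoc flip: ennreal_suminf_multc)
  also have "\<dots> = (\<Sum>n. ennreal (poisson_weight K n) * ennreal (\<Sum>i\<le>n. poisson_weight (r * t) i))"
    by (subst nn_integral_suminf) (measurable, simp add: nn_integral_cmult nn_integral_erlang_density_tail[OF r t])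
  finally show ?thesis
    using K by (simp add: ennreal_mult' poisson_weight_nonneg)
qed

lemma nn_integral_erlang_mixture:
  assumes K: "0 \<le> K" and r: "0 < r"
  shows "(\<integral>\<^sup>+x. ennreal (erlang_mixture K r x) \<partial>lborel) = 1"
proof -
  have "(\<integral>\<^sup>+x. ennreal (erlang_mixture K r x) \<partial>lborel)
      = (\<Sum>n. \<integral>\<^sup>+x. ennreal (poisson_weight K n) * ennreal (erlang_density n r x) \<partial>lborel)"
    using K r by (simp add: erlang_mixture_ennreal nn_integral_suminf)
  also have "\<dots> = (\<Sum>n. ennreal (poisson_weight K n))"
    by (simp add: nn_integral_cmult nn_integral_erlang_density_1[OF r])
  also have "\<dots> = 1"
    using poisson_weight_sums[of K] K
    by (simp add: poisson_weight_nonneg suminf_ennreal2 sums_summable sums_unique[symmetric])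
  finally show ?thesis .
qed

lemma nn_integral_erlang_density_mult_poisson_weight:
  assumes r: "0 < r" and s: "0 < s"
  shows "(\<integral>\<^sup>+u. ennreal (erlang_density m r u * poisson_weight (s * u) i) \<partial>lborel)
       = ennreal (real (m + i choose i) * (r / (r + s)) ^ Suc m * (s / (r + s)) ^ i)"
proof -
  let ?c = "(r / (r + s)) ^ Suc m * s ^ i / fact i"
  have c0: "0 \<le> ?c" using r s by simp
  have pt: "erlang_density m r u * poisson_weight (s * u) i = ?c * (erlang_density m (r + s) u * u ^ i)" for u
  proof (cases "u < 0")
    case False
    have "exp (- (r + s) * u) = exp (- r * u) * exp (- (s * u))"
      by (simp add: mult_exp_exp algebra_simps)
    moreover have "r ^ Suc m = (r / (r + s)) ^ Suc m * (r + s) ^ Suc m"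
      using r s by (simp add: power_divide)
    ultimately show ?thesis
      using False unfolding erlang_density_def poisson_weight_def
      by (simp only: if_False) (simp add: divide_inverse power_mult_distrib mult_ac)
  qed (simp add: erlang_density_def)
  have "(\<integral>\<^sup>+u. ennreal (erlang_density m r u * poisson_weight (s * u) i) \<partial>lborel)
      = ennreal ?c * ennreal (fact (m + i) / (fact m * (r + s) ^ i))"
  proof -
    have "(\<integral>\<^sup>+u. ennreal (erlang_density m r u * poisson_weight (s * u) i) \<partial>lborel)
        = (\<integral>\<^sup>+u. ennreal ?c * ennreal (erlang_density m (r + s) u * u ^ i) \<partial>lborel)"
      unfolding pt by (rule nn_integral_cong) (rule ennreal_mult'[OF c0])
    then show ?thesis using r s by (simp add: nn_integral_cmult nn_integral_erlang_ith_moment)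
  qed
  also have "\<dots> = ennreal (real (m + i choose i) * (r / (r + s)) ^ Suc m * (s / (r + s)) ^ i)"
  proof -
    have "real (m + i choose i) = fact (m + i) / (fact i * fact m)"
      by (subst binomial_fact) auto
    then show ?thesis using r s c0 by (simp add: power_divide mult_ac flip: ennreal_mult')
  qed
  finally show ?thesis .
qed

lemma nn_integral_fLoS: "0 \<le> K \<Longrightarrow> (\<integral>\<^sup>+x. ennreal (fLoS K x) \<partial>lborel) = 1"
  by (simp add: fLoS_eq_erlang_mixture nn_integral_erlang_mixture)

lemma nn_integral_fNLoS: "(\<integral>\<^sup>+x. ennreal (fNLoS x) \<partial>lborel) = 1"
  by (simp add: fNLoS_eq_erlang_mixture nn_integral_erlang_mixture)

section \<open>The outage integral of two Erlang mixtures\<close>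

definition outage_integral :: "real \<Rightarrow> real \<Rightarrow> real \<Rightarrow> (real \<Rightarrow> real) \<Rightarrow> (real \<Rightarrow> real) \<Rightarrow> ennreal" where
  "outage_integral bm bI gt f g =
     (\<integral>\<^sup>+u. ennreal (f u) * (\<integral>\<^sup>+v. ennreal (g v) * indicator {v. u * bm / (v * bI) < gt} v \<partial>lborel) \<partial>lborel)"

lemma suminf_ennreal_commute:
  fixes f :: "nat \<Rightarrow> nat \<Rightarrow> ennreal"
  shows "(\<Sum>i. \<Sum>j. f i j) = (\<Sum>j. \<Sum>i. f i j)"
proof -
  have "(\<Sum>i. \<Sum>j. f i j) = (\<Sum>i. \<integral>\<^sup>+j. f i j \<partial>count_space UNIV)"
    by (simp add: nn_integral_count_space_nat)
  also have "\<dots> = (\<integral>\<^sup>+j. (\<Sum>i. f i j) \<partial>count_space UNIV)"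
    by (rule nn_integral_suminf[symmetric]) simp
  also have "\<dots> = (\<Sum>j. \<Sum>i. f i j)"
    by (simp add: nn_integral_count_space_nat)
  finally show ?thesis .
qed

lemma suminf_ennreal_finite:
  fixes f :: "nat \<Rightarrow> ennreal"
  assumes "\<And>k. m < k \<Longrightarrow> f k = 0"
  shows "(\<Sum>k\<le>m. f k) = (\<Sum>k. f k)"
  by (rule suminf_finite[symmetric]) (auto simp: assms not_le)

lemma nn_integral_outage_set_erlang_mixture:
  assumes K: "0 \<le> K" and r: "0 < r" and bm: "0 < bm" and bI: "0 < bI" and gt: "0 < gt" and u: "0 \<le> u"
  shows "(\<integral>\<^sup>+v. ennreal (erlang_mixture K r v) * indicator {v. u * bm / (v * bI) < gt} v \<partial>lborel)
       = (\<Sum>n. ennreal (poisson_weight K n * (\<Sum>i\<le>n. poisson_weight (r * bm / (gt * bI) * u) i)))"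
proof -
  let ?t = "u * bm / (gt * bI)"
  have "(\<integral>\<^sup>+v. ennreal (erlang_mixture K r v) * indicator {v. u * bm / (v * bI) < gt} v \<partial>lborel)
      = (\<integral>\<^sup>+v. ennreal (erlang_mixture K r v) * indicator {?t<..} v \<partial>lborel)"
  proof (rule nn_integral_cong_AE)
    show "AE v in lborel. ennreal (erlang_mixture K r v) * indicator {v. u * bm / (v * bI) < gt} v
        = ennreal (erlang_mixture K r v) * indicator {?t<..} v"
      using AE_lborel_singleton[of 0]
    proof eventually_elim
      case (elim v)
      show ?case
      proof (cases "v < 0")
        case False
        with elim have "0 < v" by simp
        then have "u * bm / (v * bI) < gt \<longleftrightarrow> ?t < v"
          using bm bI gt by (simp add: pos_divide_less_eq mult_ac)
        then show ?thesis by (simp add: indicator_def)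
      qed (simp add: erlang_mixture_neg)
    qed
  qed
  also have "\<dots> = (\<Sum>n. ennreal (poisson_weight K n * (\<Sum>i\<le>n. poisson_weight (r * ?t) i)))"
    using u bm bI gt by (intro nn_integral_erlang_mixture_tail K r) simp
  finally show ?thesis by (simp add: mult_ac)
qed

lemma erlang_mixture_mult_nn_integral_outage_set:
  assumes K1: "0 \<le> K1" and K2: "0 \<le> K2" and r1: "0 < r1" and r2: "0 < r2"
    and bm: "0 < bm" and bI: "0 < bI" and gt: "0 < gt"
  defines "s \<equiv> r2 * bm / (gt * bI)"
  shows "ennreal (erlang_mixture K1 r1 u) *
      (\<integral>\<^sup>+v. ennreal (erlang_mixture K2 r2 v) * indicator {v. u * bm / (v * bI) < gt} v \<partial>lborel)
    = (\<Sum>m. \<Sum>n. \<Sum>i\<le>n. ennreal (poisson_weight K1 m * poisson_weight K2 n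
        * (erlang_density m r1 u * poisson_weight (s * u) i)))"
proof (cases "u < 0")
  case False
  then have u: "0 \<le> u" by simp
  have s: "0 < s" using r2 bm bI gt by (simp add: s_def)
  have pointwise: "ennreal (poisson_weight K1 m) * ennreal (erlang_density m r1 u) *
      ennreal (poisson_weight K2 n * (\<Sum>i\<le>n. poisson_weight (s * u) i))
    = (\<Sum>i\<le>n. ennreal (poisson_weight K1 m * poisson_weight K2 n
        * (erlang_density m r1 u * poisson_weight (s * u) i)))" for m n
  proof -
    have "0 \<le> poisson_weight K2 n * (\<Sum>i\<le>n. poisson_weight (s * u) i)"
      using K2 s u by (intro mult_nonneg_nonneg sum_nonneg poisson_weight_nonneg) auto
    moreover have "(\<Sum>i\<le>n. poisson_weight K1 m * poisson_weight K2 n * (erlang_density m r1 u * poisson_weight (s * u) i))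
        = poisson_weight K1 m * (erlang_density m r1 u * (poisson_weight K2 n * (\<Sum>i\<le>n. poisson_weight (s * u) i)))"
      by (simp add: sum_distrib_left mult_ac)
    ultimately have "ennreal (poisson_weight K1 m) * ennreal (erlang_density m r1 u) *
        ennreal (poisson_weight K2 n * (\<Sum>i\<le>n. poisson_weight (s * u) i))
      = ennreal (\<Sum>i\<le>n. poisson_weight K1 m * poisson_weight K2 n * (erlang_density m r1 u * poisson_weight (s * u) i))"
      using K1 r1 by (simp add: ennreal_mult poisson_weight_nonneg mult.assoc)
    moreover have "0 \<le> poisson_weight K1 m * poisson_weight K2 n * (erlang_density m r1 u * poisson_weight (s * u) i)" for i
      using K1 K2 r1 s u by (intro mult_nonneg_nonneg poisson_weight_nonneg erlang_density_nonneg) auto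
    ultimately show ?thesis by (simp add: sum_ennreal)
  qed
  have "ennreal (erlang_mixture K1 r1 u) *
      (\<integral>\<^sup>+v. ennreal (erlang_mixture K2 r2 v) * indicator {v. u * bm / (v * bI) < gt} v \<partial>lborel)
      = (\<Sum>m. ennreal (poisson_weight K1 m) * ennreal (erlang_density m r1 u)) *
        (\<Sum>n. ennreal (poisson_weight K2 n * (\<Sum>i\<le>n. poisson_weight (s * u) i)))"
    using nn_integral_outage_set_erlang_mixture[OF K2 r2 bm bI gt u] erlang_mixture_ennreal[OF K1, of r1 u] r1
    by (simp add: s_def)
  then show ?thesis
    unfolding pointwise[symmetric] by (simp add: mult.assoc[symmetric])
qed (simp add: erlang_mixture_neg erlang_density_def)

text \<open>
  Conditionally on the mixture indices \<open>m, n\<close> and on \<open>h\<^sub>m = u\<close>, the outage probability is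
  an Erlang tail, i.e. a partial Poisson sum in \<open>u\<close>; integrating it against the
  Erlang(\<open>m\<close>) density of \<open>h\<^sub>m\<close> produces the negative binomial law.
\<close>

lemma outage_integral_erlang_mixture_negative_binomial:
  assumes K1: "0 \<le> K1" and K2: "0 \<le> K2" and r1: "0 < r1" and r2: "0 < r2"
    and bm: "0 < bm" and bI: "0 < bI" and gt: "0 < gt"
  defines "q \<equiv> r1 / (r1 + r2 * bm / (gt * bI))"
  shows "outage_integral bm bI gt (erlang_mixture K1 r1) (erlang_mixture K2 r2)
       = (\<Sum>m. \<Sum>n. ennreal (poisson_weight K1 m * poisson_weight K2 n
            * (\<Sum>i\<le>n. real (m + i choose i) * q ^ Suc m * (1 - q) ^ i)))"
proof -
  define s where "s = r2 * bm / (gt * bI)"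
  have s: "0 < s" using r2 bm bI gt by (simp add: s_def)
  have q: "r1 / (r1 + s) = q" "s / (r1 + s) = 1 - q" "0 \<le> q"
    using r1 s by (simp_all add: q_def s_def field_simps)
  have pp: "0 \<le> poisson_weight K1 m * poisson_weight K2 n" for m n
    using K1 K2 by (simp add: poisson_weight_nonneg)
  have "(\<integral>\<^sup>+u. ennreal (poisson_weight K1 m * poisson_weight K2 n * (erlang_density m r1 u * poisson_weight (s * u) i)) \<partial>lborel)
      = ennreal (poisson_weight K1 m * poisson_weight K2 n * (real (m + i choose i) * q ^ Suc m * (1 - q) ^ i))"
    for m n i
  proof -
    have "(\<integral>\<^sup>+u. ennreal (poisson_weight K1 m * poisson_weight K2 n * (erlang_density m r1 u * poisson_weight (s * u) i)) \<partial>lborel)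
        = ennreal (poisson_weight K1 m * poisson_weight K2 n)
          * (\<integral>\<^sup>+u. ennreal (erlang_density m r1 u * poisson_weight (s * u) i) \<partial>lborel)"
      by (subst nn_integral_cmult[symmetric]) (measurable, rule nn_integral_cong, simp add: ennreal_mult'[OF pp])
    then show ?thesis
      using q by (simp add: nn_integral_erlang_density_mult_poisson_weight[OF r1 s] ennreal_mult'[OF pp])
  qed
  moreover have "(\<Sum>i\<le>n. ennreal (poisson_weight K1 m * poisson_weight K2 n * (real (m + i choose i) * q ^ Suc m * (1 - q) ^ i)))
      = ennreal (poisson_weight K1 m * poisson_weight K2 n * (\<Sum>i\<le>n. real (m + i choose i) * q ^ Suc m * (1 - q) ^ i))" for m n
    unfolding sum_distrib_left using pp q(3) q(2)[symmetric] s r1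
    by (intro sum_ennreal) (auto intro!: mult_nonneg_nonneg)
  ultimately show ?thesis
    unfolding outage_integral_def erlang_mixture_mult_nn_integral_outage_set[OF K1 K2 r1 r2 bm bI gt, folded s_def]
    by (simp add: nn_integral_suminf nn_integral_sum)
qed

lemma suminf_ennreal_interchange:
  fixes T :: "nat \<Rightarrow> nat \<Rightarrow> nat \<Rightarrow> nat \<Rightarrow> ennreal"
  shows "(\<Sum>m. \<Sum>n. \<Sum>k. \<Sum>j. T m n k j) = (\<Sum>k. \<Sum>j. \<Sum>m. \<Sum>n. T m n k j)"
proof -
  have "(\<Sum>m. \<Sum>n. \<Sum>k. \<Sum>j. T m n k j) = (\<Sum>m. \<Sum>k. \<Sum>n. \<Sum>j. T m n k j)"
    by (subst suminf_ennreal_commute) rule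
  also have "\<dots> = (\<Sum>k. \<Sum>m. \<Sum>j. \<Sum>n. T m n k j)"
    by (subst suminf_ennreal_commute[of "\<lambda>n j. T _ n _ j"]) (rule suminf_ennreal_commute)
  also have "\<dots> = (\<Sum>k. \<Sum>j. \<Sum>m. \<Sum>n. T m n k j)"
    by (subst suminf_ennreal_commute[of "\<lambda>m j. \<Sum>n. T m n _ j"]) rule
  finally show ?thesis .
qed

lemma ennreal_poisson_binomial_order_sum:
  assumes K1: "0 \<le> K1" and K2: "0 \<le> K2" and q: "0 \<le> q" "q \<le> 1"
  shows "ennreal (poisson_weight K1 m * poisson_weight K2 n
            * (\<Sum>k\<le>m. binomial_weight m (1 - q) k * binomial_order_weight q k n))
       = (\<Sum>k. \<Sum>j. ennreal (poisson_weight K1 m * binomial_weight m (1 - q) k)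
            * ennreal (poisson_weight K2 n * binomial_weight n q j) * ennreal (order_weight q k j))"
    (is "_ = (\<Sum>k. \<Sum>j. ?T k j)")
proof -
  have "0 \<le> poisson_weight K1 m * binomial_weight m (1 - q) k" "0 \<le> poisson_weight K2 n * binomial_weight n q j"
    "0 \<le> order_weight q k j" for k j
    using K1 K2 q by (auto intro!: mult_nonneg_nonneg poisson_weight_nonneg binomial_weight_nonneg order_weight_nonneg)
  moreover have "poisson_weight K1 m * poisson_weight K2 n * (\<Sum>k\<le>m. binomial_weight m (1 - q) k * binomial_order_weight q k n)
      = (\<Sum>k\<le>m. \<Sum>j\<le>n. (poisson_weight K1 m * binomial_weight m (1 - q) k)
          * (poisson_weight K2 n * binomial_weight n q j) * order_weight q k j)"
    unfolding binomial_order_weight_def by (simp add: sum_distrib_left mult_ac)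
  ultimately have "ennreal (poisson_weight K1 m * poisson_weight K2 n
      * (\<Sum>k\<le>m. binomial_weight m (1 - q) k * binomial_order_weight q k n)) = (\<Sum>k\<le>m. \<Sum>j\<le>n. ?T k j)"
    by (simp add: ennreal_mult[symmetric] sum_nonneg mult_nonneg_nonneg)
  also have "\<dots> = (\<Sum>k. \<Sum>j. ?T k j)"
  proof -
    have "(\<Sum>j\<le>n. ?T k j) = (\<Sum>j. ?T k j)" for k
      by (rule suminf_ennreal_finite) (simp add: binomial_weight_eq_0)
    moreover have "(\<Sum>k\<le>m. \<Sum>j. ?T k j) = (\<Sum>k. \<Sum>j. ?T k j)"
      by (rule suminf_ennreal_finite) (simp add: binomial_weight_eq_0)
    ultimately show ?thesis by simp
  qed
  finally show ?thesis .
qed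

lemma poisson_thinning_double_suminf:
  assumes K1: "0 \<le> K1" and K2: "0 \<le> K2" and q: "0 \<le> q" "q \<le> 1"
  shows "(\<Sum>m. \<Sum>n. ennreal (poisson_weight K1 m * poisson_weight K2 n
            * (\<Sum>k\<le>m. binomial_weight m (1 - q) k * binomial_order_weight q k n)))
       = (\<Sum>k. \<Sum>j. ennreal (poisson_weight (K1 * (1 - q)) k * poisson_weight (K2 * q) j * order_weight q k j))"
proof -
  have "(\<Sum>m. \<Sum>n. ennreal (poisson_weight K1 m * binomial_weight m (1 - q) k)
      * ennreal (poisson_weight K2 n * binomial_weight n q j) * ennreal (order_weight q k j))
    = ennreal (poisson_weight (K1 * (1 - q)) k * poisson_weight (K2 * q) j * order_weight q k j)" for k j
  proof -
    have "(\<Sum>m. \<Sum>n. ennreal (poisson_weight K1 m * binomial_weight m (1 - q) k)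
        * ennreal (poisson_weight K2 n * binomial_weight n q j) * ennreal (order_weight q k j))
      = (\<Sum>m. ennreal (poisson_weight K1 m * binomial_weight m (1 - q) k))
        * ((\<Sum>n. ennreal (poisson_weight K2 n * binomial_weight n q j)) * ennreal (order_weight q k j))"
      by (simp add: mult.assoc)
    also have "\<dots> = ennreal (poisson_weight (K1 * (1 - q)) k) * (ennreal (poisson_weight (K2 * q) j) * ennreal (order_weight q k j))"
      using K1 K2 q by (simp only: poisson_thinning_ennreal)
    finally show ?thesis
      using K1 K2 q by (simp add: ennreal_mult poisson_weight_nonneg order_weight_nonneg mult.assoc)
  qed
  then show ?thesis
    by (simp add: ennreal_poisson_binomial_order_sum[OF K1 K2 q] suminf_ennreal_interchange)
qed

section \<open>The double Poisson series\<close>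

definition poisson_order_series :: "real \<Rightarrow> real \<Rightarrow> real \<Rightarrow> real" where
  "poisson_order_series \<alpha> \<beta> q = (\<Sum>k. poisson_weight \<alpha> k * (1 - (\<Sum>j\<le>k. poisson_weight \<beta> j) + q * poisson_weight \<beta> k))"

lemma poisson_order_weight_sums:
  "(\<lambda>j. poisson_weight \<beta> j * order_weight q k j) sums (1 - (\<Sum>j\<le>k. poisson_weight \<beta> j) + q * poisson_weight \<beta> k)"
proof -
  have "poisson_weight \<beta> j * order_weight q k j
      = (poisson_weight \<beta> j - (if j \<in> {..k} then poisson_weight \<beta> j else 0))
        + (if j = k then q * poisson_weight \<beta> k else 0)" for j
    by (auto simp: order_weight_def)
  moreover have "(\<lambda>j. (poisson_weight \<beta> j - (if j \<in> {..k} then poisson_weight \<beta> j else 0))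
      + (if j = k then q * poisson_weight \<beta> k else 0))
      sums (1 - (\<Sum>j\<le>k. poisson_weight \<beta> j) + q * poisson_weight \<beta> k)"
    by (intro sums_add sums_diff poisson_weight_sums sums_If_finite_set)
      (auto intro: sums_single[of k "\<lambda>_. q * poisson_weight \<beta> k", simplified])
  ultimately show ?thesis by simp
qed

lemma poisson_order_term_bounds:
  assumes "0 \<le> \<beta>" "0 \<le> q" "q \<le> 1"
  shows "0 \<le> 1 - (\<Sum>j\<le>k. poisson_weight \<beta> j) + q * poisson_weight \<beta> k"
    and "1 - (\<Sum>j\<le>k. poisson_weight \<beta> j) + q * poisson_weight \<beta> k \<le> 2"
proof -
  have "poisson_weight \<beta> k \<le> (\<Sum>j\<le>k. poisson_weight \<beta> j)"
    using assms by (intro member_le_sum) (auto simp: poisson_weight_nonneg)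
  moreover have "0 \<le> poisson_weight \<beta> k" "(\<Sum>j\<le>k. poisson_weight \<beta> j) \<le> 1"
    using assms by (simp_all add: poisson_weight_nonneg sum_poisson_weight_le_1)
  moreover have "q * poisson_weight \<beta> k \<le> poisson_weight \<beta> k"
    using assms \<open>0 \<le> poisson_weight \<beta> k\<close> by (simp add: mult_left_le_one_le)
  ultimately show "0 \<le> 1 - (\<Sum>j\<le>k. poisson_weight \<beta> j) + q * poisson_weight \<beta> k"
    and "1 - (\<Sum>j\<le>k. poisson_weight \<beta> j) + q * poisson_weight \<beta> k \<le> 2"
    using assms by (auto intro: mult_nonneg_nonneg)
qed

lemma summable_poisson_order_series:
  assumes "0 \<le> \<alpha>" "0 \<le> \<beta>" "0 \<le> q" "q \<le> 1"
  shows "summable (\<lambda>k. poisson_weight \<alpha> k * (1 - (\<Sum>j\<le>k. poisson_weight \<beta> j) + q * poisson_weight \<beta> k))"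
proof (rule summable_comparison_test[OF _ summable_mult[OF summable_poisson_weight, of 2]])
  show "\<exists>N. \<forall>k\<ge>N. norm (poisson_weight \<alpha> k * (1 - (\<Sum>j\<le>k. poisson_weight \<beta> j) + q * poisson_weight \<beta> k))
      \<le> 2 * poisson_weight \<alpha> k"
  proof (intro exI allI impI)
    fix k
    let ?t = "1 - (\<Sum>j\<le>k. poisson_weight \<beta> j) + q * poisson_weight \<beta> k"
    have "poisson_weight \<alpha> k * ?t \<le> poisson_weight \<alpha> k * 2"
      using assms poisson_order_term_bounds[OF assms(2-4)] by (intro mult_left_mono) (auto simp: poisson_weight_nonneg)
    then show "norm (poisson_weight \<alpha> k * ?t) \<le> 2 * poisson_weight \<alpha> k"
      using assms poisson_order_term_bounds[OF assms(2-4), of k] by (simp add: abs_mult poisson_weight_nonneg)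
  qed
qed

lemma poisson_order_series_nonneg:
  "0 \<le> \<alpha> \<Longrightarrow> 0 \<le> \<beta> \<Longrightarrow> 0 \<le> q \<Longrightarrow> q \<le> 1 \<Longrightarrow> 0 \<le> poisson_order_series \<alpha> \<beta> q"
  unfolding poisson_order_series_def
  by (intro suminf_nonneg summable_poisson_order_series mult_nonneg_nonneg poisson_weight_nonneg
      poisson_order_term_bounds)

lemma suminf_poisson_order_weight:
  assumes "0 \<le> \<alpha>" "0 \<le> \<beta>" "0 \<le> q" "q \<le> 1"
  shows "(\<Sum>k. \<Sum>j. ennreal (poisson_weight \<alpha> k * poisson_weight \<beta> j * order_weight q k j))
       = ennreal (poisson_order_series \<alpha> \<beta> q)"
proof -
  have "(\<Sum>j. ennreal (poisson_weight \<alpha> k * poisson_weight \<beta> j * order_weight q k j))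
      = ennreal (poisson_weight \<alpha> k * (1 - (\<Sum>j\<le>k. poisson_weight \<beta> j) + q * poisson_weight \<beta> k))" for k
  proof -
    have "(\<lambda>j. poisson_weight \<alpha> k * (poisson_weight \<beta> j * order_weight q k j))
        sums (poisson_weight \<alpha> k * (1 - (\<Sum>j\<le>k. poisson_weight \<beta> j) + q * poisson_weight \<beta> k))"
      by (intro sums_mult poisson_order_weight_sums)
    then have "(\<lambda>j. ennreal (poisson_weight \<alpha> k * poisson_weight \<beta> j * order_weight q k j))
        sums ennreal (poisson_weight \<alpha> k * (1 - (\<Sum>j\<le>k. poisson_weight \<beta> j) + q * poisson_weight \<beta> k))"
      using assms poisson_order_term_bounds[OF assms(2-4)]
      by (subst sums_ennreal) (auto simp: mult.assoc intro!: mult_nonneg_nonneg poisson_weight_nonneg order_weight_nonneg)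
    then show ?thesis by (rule sums_unique[symmetric])
  qed
  then show ?thesis
    unfolding poisson_order_series_def using assms poisson_order_term_bounds[OF assms(2-4)]
    by (simp add: suminf_ennreal2 summable_poisson_order_series mult_nonneg_nonneg poisson_weight_nonneg)
qed

lemma poisson_order_series_0_right: "poisson_order_series \<alpha> 0 q = q * exp (- \<alpha>)"
proof -
  have "poisson_order_series \<alpha> 0 q
      = (\<Sum>k\<in>{0}. poisson_weight \<alpha> k * (1 - (\<Sum>j\<le>k. poisson_weight 0 j) + q * poisson_weight 0 k))"
    unfolding poisson_order_series_def
    by (rule suminf_finite) (auto simp: poisson_weight_0)
  then show ?thesis by (simp add: poisson_weight_0 poisson_weight_def)
qed

lemma poisson_order_series_0_left: "poisson_order_series 0 \<beta> q = 1 - (1 - q) * exp (- \<beta>)"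
  unfolding poisson_order_series_def suminf_poisson_weight_0
  by (simp add: poisson_weight_def algebra_simps)

section \<open>The Marcum Q-function as a Poisson series\<close>

lemma has_real_derivative_poisson_weight:
  "((\<lambda>y. poisson_weight y i) has_real_derivative
      (if i = 0 then 0 else poisson_weight y (i - 1)) - poisson_weight y i) (at y)"
proof (cases i)
  case (Suc j)
  have "((\<lambda>y. exp (- y) * y ^ Suc j / fact (Suc j)) has_real_derivative
      (- exp (- y) * y ^ Suc j + real (Suc j) * y ^ j * exp (- y)) / fact (Suc j)) (at y)"
  proof (rule DERIV_cdivide[OF DERIV_mult])
    show "((\<lambda>y. exp (- y)) has_real_derivative - exp (- y)) (at y)"
      by (auto intro!: derivative_eq_intros)
    show "((\<lambda>y. y ^ Suc j) has_real_derivative real (Suc j) * y ^ j) (at y)"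
      using DERIV_pow[of "Suc j" y] by simp
  qed
  moreover have "(- exp (- y) * y ^ Suc j + real (Suc j) * y ^ j * exp (- y)) / fact (Suc j)
      = exp (- y) * y ^ j / fact j - exp (- y) * y ^ Suc j / fact (Suc j)"
  proof -
    have "real (Suc j) * y ^ j * exp (- y) / fact (Suc j) = exp (- y) * y ^ j / fact j"
      by (simp add: fact_Suc del: of_nat_Suc)
    then show ?thesis by (simp add: diff_divide_distrib add_divide_distrib)
  qed
  ultimately show ?thesis
    unfolding Suc poisson_weight_def by simp
qed (auto simp: poisson_weight_def intro!: derivative_eq_intros)

text \<open>The partial Poisson sums telescope under differentiation in \<open>x\<^sup>2/2\<close>.\<close>

lemma has_real_derivative_sum_poisson_weight:
  "((\<lambda>x. - (\<Sum>i\<le>k. poisson_weight (x\<^sup>2 / 2) i)) has_real_derivative x * poisson_weight (x\<^sup>2 / 2) k) (at x)"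
proof -
  have "((\<lambda>x::real. x\<^sup>2 / 2) has_real_derivative x) (at x)"
    by (auto intro!: derivative_eq_intros)
  from DERIV_chain2[OF has_real_derivative_poisson_weight this]
  have d: "((\<lambda>x. poisson_weight (x\<^sup>2 / 2) i) has_real_derivative
      x * ((if i = 0 then 0 else poisson_weight (x\<^sup>2 / 2) (i - 1)) - poisson_weight (x\<^sup>2 / 2) i)) (at x)" for i
    by (simp add: mult.commute)
  show ?thesis
  proof (induction k)
    case 0
    show ?case using DERIV_minus[OF d[of 0]] by simp
  next
    case (Suc k)
    have "(\<lambda>x. - (\<Sum>i\<le>Suc k. poisson_weight (x\<^sup>2 / 2) i))
        = (\<lambda>x. - (\<Sum>i\<le>k. poisson_weight (x\<^sup>2 / 2) i) - poisson_weight (x\<^sup>2 / 2) (Suc k))"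
      by (simp add: fun_eq_iff)
    with DERIV_diff[OF Suc d[of "Suc k"]] show ?case
      by (simp add: algebra_simps)
  qed
qed

lemma poisson_weight_square_tendsto_0: "((\<lambda>x::real. poisson_weight (x\<^sup>2 / 2) i) \<longlongrightarrow> 0) at_top"
proof -
  have "filterlim (\<lambda>x::real. x\<^sup>2 / 2) at_top at_top"
    by real_asymp
  moreover have "((\<lambda>y::real. y ^ i / exp y / fact i) \<longlongrightarrow> 0 / fact i) at_top"
    by (intro tendsto_divide tendsto_power_div_exp_0 tendsto_const) simp
  ultimately have "((\<lambda>x::real. (x\<^sup>2 / 2) ^ i / exp (x\<^sup>2 / 2) / fact i) \<longlongrightarrow> 0) at_top"
    using filterlim_compose by fastforce
  moreover have "poisson_weight y i = y ^ i / exp y / fact i" for y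
    by (simp add: poisson_weight_def exp_minus divide_inverse)
  ultimately show ?thesis by simp
qed

lemma nn_integral_poisson_weight_square:
  assumes b: "0 \<le> b"
  shows "(\<integral>\<^sup>+x. ennreal (x * poisson_weight (x\<^sup>2 / 2) k) * indicator {b..} x \<partial>lborel)
       = ennreal (\<Sum>i\<le>k. poisson_weight (b\<^sup>2 / 2) i)"
proof -
  have "(\<integral>\<^sup>+x. ennreal (x * poisson_weight (x\<^sup>2 / 2) k) * indicator {b..} x \<partial>lborel)
      = ennreal (0 - (- (\<Sum>i\<le>k. poisson_weight (b\<^sup>2 / 2) i)))"
  proof (rule nn_integral_FTC_atLeast)
    show "0 \<le> x * poisson_weight (x\<^sup>2 / 2) k" if "b \<le> x" for x
      using that b by (intro mult_nonneg_nonneg poisson_weight_nonneg) auto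
    show "((\<lambda>x. - (\<Sum>i\<le>k. poisson_weight (x\<^sup>2 / 2) i)) \<longlongrightarrow> 0) at_top"
      using tendsto_minus[OF tendsto_null_sum[OF poisson_weight_square_tendsto_0]] by simp
  qed (auto intro: has_real_derivative_sum_poisson_weight)
  then show ?thesis by simp
qed

text \<open>
  Expanding \<open>I\<^sub>0(ax)\<close> turns the Marcum integrand into \<open>\<Sum>\<^sub>k Pois(a\<^sup>2/2)(k) x Pois(x\<^sup>2/2)(k)\<close>;
  each term integrates to a partial Poisson sum in \<open>b\<^sup>2/2\<close>.
\<close>

lemma marcumQ_integrand_sums:
  "(\<lambda>k. poisson_weight (a\<^sup>2 / 2) k * (x * poisson_weight (x\<^sup>2 / 2) k))
     sums (x * exp (- (x\<^sup>2 + a\<^sup>2) / 2) * besselI0 (a * x))"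
proof -
  have "(4::real) ^ k = 2 ^ k * 2 ^ k" for k :: nat by (simp flip: power_mult_distrib)
  then have "poisson_weight (a\<^sup>2 / 2) k * (x * poisson_weight (x\<^sup>2 / 2) k)
      = (exp (- (x\<^sup>2 + a\<^sup>2) / 2) * x) * (((a * x)\<^sup>2 / 4) ^ k / (fact k)\<^sup>2)" for k
    by (simp add: poisson_weight_def power2_eq_square power_mult_distrib field_simps mult_exp_exp)
  moreover have "(\<lambda>k. (exp (- (x\<^sup>2 + a\<^sup>2) / 2) * x) * (((a * x)\<^sup>2 / 4) ^ k / (fact k)\<^sup>2))
      sums ((exp (- (x\<^sup>2 + a\<^sup>2) / 2) * x) * besselI0 (a * x))"
    unfolding besselI0_def by (intro sums_mult summable_sums summable_bessel_series)
  ultimately show ?thesis by (simp add: mult_ac)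
qed

lemma marcumQ_sums:
  assumes a: "0 \<le> a" and b: "0 \<le> b"
  shows "(\<lambda>k. poisson_weight (a\<^sup>2 / 2) k * (\<Sum>i\<le>k. poisson_weight (b\<^sup>2 / 2) i)) sums marcumQ a b"
proof -
  let ?f = "\<lambda>x. x * exp (- (x\<^sup>2 + a\<^sup>2) / 2) * besselI0 (a * x)"
  let ?t = "\<lambda>k x. poisson_weight (a\<^sup>2 / 2) k * (x * poisson_weight (x\<^sup>2 / 2) k)"
  let ?S = "\<lambda>k. poisson_weight (a\<^sup>2 / 2) k * (\<Sum>i\<le>k. poisson_weight (b\<^sup>2 / 2) i)"
  have S_nonneg: "0 \<le> ?S k" for k
    by (simp add: poisson_weight_nonneg sum_nonneg)
  have summable_S: "summable ?S"
  proof (rule summable_comparison_test[OF _ summable_poisson_weight[of "a\<^sup>2 / 2"]])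
    show "\<exists>N. \<forall>n\<ge>N. norm (?S n) \<le> poisson_weight (a\<^sup>2 / 2) n"
      using sum_poisson_weight_le_1[of "b\<^sup>2/2"]
      by (auto simp: poisson_weight_nonneg sum_nonneg abs_mult intro!: mult_left_le)
  qed
  have "marcumQ a b = enn2real (\<integral>\<^sup>+x. ennreal (indicator {b..} x *\<^sub>R ?f x) \<partial>lborel)"
    unfolding marcumQ_def set_lebesgue_integral_def using b
    by (intro integral_eq_nn_integral) (auto simp: besselI0_nonneg indicator_def)
  also have "(\<integral>\<^sup>+x. ennreal (indicator {b..} x *\<^sub>R ?f x) \<partial>lborel)
      = (\<integral>\<^sup>+x. (\<Sum>k. ennreal (poisson_weight (a\<^sup>2 / 2) k) * (ennreal (x * poisson_weight (x\<^sup>2 / 2) k) * indicator {b..} x)) \<partial>lborel)"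
  proof (rule nn_integral_cong)
    fix x :: real
    show "ennreal (indicator {b..} x *\<^sub>R ?f x)
      = (\<Sum>k. ennreal (poisson_weight (a\<^sup>2 / 2) k) * (ennreal (x * poisson_weight (x\<^sup>2 / 2) k) * indicator {b..} x))"
    proof (cases "b \<le> x")
      case True
      then have x: "0 \<le> x" using b by simp
      have "(\<lambda>k. ennreal (?t k x)) sums ennreal (?f x)"
        using marcumQ_integrand_sums[of a x] x by (subst sums_ennreal) (auto intro!: mult_nonneg_nonneg poisson_weight_nonneg besselI0_nonneg)
      then show ?thesis
        using True x by (simp add: sums_iff ennreal_mult poisson_weight_nonneg)
    qed simp
  qed
  also have "\<dots> = (\<Sum>k. ennreal (?S k))"
    using b by (simp add: nn_integral_suminf nn_integral_cmult nn_integral_poisson_weight_square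
        ennreal_mult poisson_weight_nonneg sum_nonneg)
  also have "\<dots> = ennreal (suminf ?S)"
    by (intro suminf_ennreal2 summable_S S_nonneg)
  finally have "marcumQ a b = suminf ?S"
    by (simp add: suminf_nonneg summable_S S_nonneg)
  then show ?thesis using summable_S by (simp add: summable_sums)
qed

lemma poisson_weight_mult_sums_besselI0:
  assumes "0 \<le> \<alpha>" "0 \<le> \<beta>"
  shows "(\<lambda>k. poisson_weight \<alpha> k * poisson_weight \<beta> k) sums (exp (- (\<alpha> + \<beta>)) * besselI0 (2 * sqrt (\<alpha> * \<beta>)))"
proof -
  have "poisson_weight \<alpha> k * poisson_weight \<beta> k = exp (- (\<alpha> + \<beta>)) * ((\<alpha> * \<beta>) ^ k / (fact k)\<^sup>2)" for k
    by (simp add: poisson_weight_def power2_eq_square power_mult_distrib mult_exp_exp algebra_simps)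
  moreover have "(\<Sum>k. (\<alpha> * \<beta>) ^ k / (fact k)\<^sup>2) = besselI0 (2 * sqrt (\<alpha> * \<beta>))"
    using assms by (simp add: besselI0_def power_mult_distrib)
  ultimately show ?thesis
    using sums_mult[OF summable_sums[OF summable_bessel_series], of "exp (- (\<alpha> + \<beta>))" "\<alpha> * \<beta>"] by simp
qed

lemma poisson_order_series_eq_marcumQ:
  assumes "0 \<le> \<alpha>" "0 \<le> \<beta>"
  shows "poisson_order_series \<alpha> \<beta> q
     = 1 - marcumQ (sqrt (2 * \<alpha>)) (sqrt (2 * \<beta>)) + q * (exp (- (\<alpha> + \<beta>)) * besselI0 (2 * sqrt (\<alpha> * \<beta>)))"
proof -
  have "(\<lambda>k. poisson_weight \<alpha> k * (\<Sum>j\<le>k. poisson_weight \<beta> j)) sums marcumQ (sqrt (2 * \<alpha>)) (sqrt (2 * \<beta>))"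
    using marcumQ_sums[of "sqrt (2 * \<alpha>)" "sqrt (2 * \<beta>)"] assms by simp
  then have "(\<lambda>k. (poisson_weight \<alpha> k - poisson_weight \<alpha> k * (\<Sum>j\<le>k. poisson_weight \<beta> j))
      + q * (poisson_weight \<alpha> k * poisson_weight \<beta> k))
      sums (1 - marcumQ (sqrt (2 * \<alpha>)) (sqrt (2 * \<beta>)) + q * (exp (- (\<alpha> + \<beta>)) * besselI0 (2 * sqrt (\<alpha> * \<beta>))))"
    by (intro sums_add sums_diff poisson_weight_sums sums_mult poisson_weight_mult_sums_besselI0 assms)
  then show ?thesis
    unfolding poisson_order_series_def by (simp add: sums_iff algebra_simps)
qed

section \<open>The four environment combinations\<close>

lemma outage_integral_erlang_mixture:
  assumes K1: "0 \<le> K1" and K2: "0 \<le> K2" and r1: "0 < r1" and r2: "0 < r2"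
    and bm: "0 < bm" and bI: "0 < bI" and gt: "0 < gt"
    and q: "q = r1 / (r1 + r2 * bm / (gt * bI))"
  shows "outage_integral bm bI gt (erlang_mixture K1 r1) (erlang_mixture K2 r2)
       = ennreal (poisson_order_series (K1 * (1 - q)) (K2 * q) q)"
    and "0 \<le> poisson_order_series (K1 * (1 - q)) (K2 * q) q"
proof -
  have "0 < r2 * bm / (gt * bI)" using r2 bm bI gt by simp
  then have q01: "0 \<le> q" "q \<le> 1" using r1 by (auto simp: q divide_le_eq_1)
  then have "0 \<le> K1 * (1 - q)" "0 \<le> K2 * q" using K1 K2 by simp_all
  with q01 show "0 \<le> poisson_order_series (K1 * (1 - q)) (K2 * q) q"
    by (intro poisson_order_series_nonneg)
  show "outage_integral bm bI gt (erlang_mixture K1 r1) (erlang_mixture K2 r2)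
       = ennreal (poisson_order_series (K1 * (1 - q)) (K2 * q) q)"
    unfolding outage_integral_erlang_mixture_negative_binomial[OF K1 K2 r1 r2 bm bI gt, folded q]
      negative_binomial_sum_eq_binomial_order_sum poisson_thinning_double_suminf[OF K1 K2 q01]
    by (rule suminf_poisson_order_weight) fact+
qed

lemma outage_integral_LoS_LoS:
  assumes Km: "0 < Km" and KI: "0 < KI" and bm: "0 < bm" and bI: "0 < bI" and gt: "0 < gt"
  shows "outage_integral bm bI gt (fLoS Km) (fLoS KI) = ennreal (po_LL bm bI gt Km KI)"
    and "0 \<le> po_LL bm bI gt Km KI"
proof -
  define s where "s = bm + gt * bI"
  define q where "q = gt * bI / s"
  define \<alpha> where "\<alpha> = Km * (1 - q)"
  define \<beta> where "\<beta> = KI * q"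
  have s: "0 < s" using bm bI gt by (simp add: s_def add_pos_pos)
  have q_eq: "q = (1/2) / (1/2 + (1/2) * bm / (gt * bI))"
    using bm bI gt by (simp add: q_def s_def field_simps)
  have 1: "1 - q = bm / s" using s by (simp add: q_def s_def field_simps)
  have "0 \<le> q" "q \<le> 1" using bm bI gt s by (auto simp: q_def s_def)
  then have \<alpha>\<beta>: "0 \<le> \<alpha>" "0 \<le> \<beta>" using Km KI by (simp_all add: \<alpha>_def \<beta>_def)
  have sqrt_\<alpha>\<beta>: "2 * sqrt (\<alpha> * \<beta>) = 2 * bm / (bm + gt * bI) * sqrt (gt * Km * KI * bI / bm)"
  proof -
    have "\<alpha> * \<beta> = (bm / s)\<^sup>2 * (gt * Km * KI * bI / bm)"
      using bm s by (simp add: \<alpha>_def \<beta>_def 1 q_def power2_eq_square field_simps) (simp add: s_def algebra_simps)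
    then have "sqrt (\<alpha> * \<beta>) = sqrt ((bm / s)\<^sup>2) * sqrt (gt * Km * KI * bI / bm)"
      by (simp only: real_sqrt_mult)
    then show ?thesis using bm s by (simp only: real_sqrt_abs) (simp add: s_def)
  qed
  have e1: "2 * \<alpha> = 2 * Km * bm / (bm + gt * bI)" by (simp add: \<alpha>_def 1 s_def)
  have e2: "2 * \<beta> = 2 * gt * KI * bI / (bm + gt * bI)" by (simp add: \<beta>_def q_def s_def)
  have "\<alpha> + \<beta> = (Km * bm + gt * KI * bI) / (bm + gt * bI)"
    unfolding \<alpha>_def \<beta>_def 1 by (simp add: q_def s_def add_divide_distrib mult_ac)
  then have e3: "- (\<alpha> + \<beta>) = - (Km * bm + gt * KI * bI) / (bm + gt * bI)"
    by (simp add: minus_divide_left)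
  have series: "poisson_order_series \<alpha> \<beta> q = po_LL bm bI gt Km KI"
    unfolding poisson_order_series_eq_marcumQ[OF \<alpha>\<beta>] po_LL_def e1[symmetric] e2[symmetric] e3[symmetric]
      sqrt_\<alpha>\<beta>[symmetric]
    by (simp add: q_def s_def)
  show "outage_integral bm bI gt (fLoS Km) (fLoS KI) = ennreal (po_LL bm bI gt Km KI)"
    using outage_integral_erlang_mixture(1)[OF _ _ _ _ bm bI gt q_eq, of Km KI] Km KI
    by (simp add: fLoS_eq_erlang_mixture series[unfolded \<alpha>_def \<beta>_def])
  show "0 \<le> po_LL bm bI gt Km KI"
    using outage_integral_erlang_mixture(2)[OF _ _ _ _ bm bI gt q_eq, of Km KI] Km KI
    by (simp add: series[unfolded \<alpha>_def \<beta>_def])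
qed

lemma outage_integral_LoS_NLoS:
  assumes Km: "0 < Km" and bm: "0 < bm" and bI: "0 < bI" and gt: "0 < gt"
  shows "outage_integral bm bI gt (fLoS Km) fNLoS = ennreal (po_LN bm bI gt Km)"
    and "0 \<le> po_LN bm bI gt Km"
proof -
  define s where "s = 2 * bm + gt * bI"
  define q where "q = gt * bI / s"
  have s: "0 < s" using bm bI gt by (simp add: s_def add_pos_pos)
  have q_eq: "q = (1/2) / (1/2 + 1 * bm / (gt * bI))"
    using bm bI gt by (simp add: q_def s_def field_simps)
  have "- (Km * (1 - q)) = - (2 * Km * bm) / (2 * bm + gt * bI)"
    using s by (simp add: q_def s_def field_simps)
  then have "poisson_order_series (Km * (1 - q)) (0 * q) q = po_LN bm bI gt Km"
    by (simp add: poisson_order_series_0_right po_LN_def q_def s_def)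
  then show "outage_integral bm bI gt (fLoS Km) fNLoS = ennreal (po_LN bm bI gt Km)"
    using outage_integral_erlang_mixture(1)[OF _ _ _ _ bm bI gt q_eq, of Km 0] Km
    by (simp add: fLoS_eq_erlang_mixture fNLoS_eq_erlang_mixture)
  show "0 \<le> po_LN bm bI gt Km" using bm bI gt by (simp add: po_LN_def add_pos_pos)
qed

lemma outage_integral_NLoS_LoS:
  assumes KI: "0 < KI" and bm: "0 < bm" and bI: "0 < bI" and gt: "0 < gt"
  shows "outage_integral bm bI gt fNLoS (fLoS KI) = ennreal (po_NL bm bI gt KI)"
    and "0 \<le> po_NL bm bI gt KI"
proof -
  define s where "s = 2 * gt * bI + bm"
  define q where "q = 2 * gt * bI / s"
  have s: "0 < s" using bm bI gt by (simp add: s_def add_pos_pos)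
  have q_eq: "q = 1 / (1 + (1/2) * bm / (gt * bI))"
    using bm bI gt by (simp add: q_def s_def field_simps)
  have "1 - q = bm / s" "- (KI * q) = - (2 * gt * KI * bI) / (2 * gt * bI + bm)"
    using s by (simp_all add: q_def s_def field_simps)
  then have series: "poisson_order_series (0 * (1 - q)) (KI * q) q = po_NL bm bI gt KI"
    by (simp add: poisson_order_series_0_left po_NL_def s_def)
  then show "outage_integral bm bI gt fNLoS (fLoS KI) = ennreal (po_NL bm bI gt KI)"
    using outage_integral_erlang_mixture(1)[OF _ _ _ _ bm bI gt q_eq, of 0 KI] KI
    by (simp add: fLoS_eq_erlang_mixture fNLoS_eq_erlang_mixture)
  show "0 \<le> po_NL bm bI gt KI"
    using outage_integral_erlang_mixture(2)[OF _ _ _ _ bm bI gt q_eq, of 0 KI] KI series by simp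
qed

lemma outage_integral_NLoS_NLoS:
  assumes bm: "0 < bm" and bI: "0 < bI" and gt: "0 < gt"
  shows "outage_integral bm bI gt fNLoS fNLoS = ennreal (po_NN bm bI gt)"
    and "0 \<le> po_NN bm bI gt"
proof -
  have q_eq: "po_NN bm bI gt = 1 / (1 + 1 * bm / (gt * bI))"
    using bm bI gt by (simp add: po_NN_def field_simps)
  show "outage_integral bm bI gt fNLoS fNLoS = ennreal (po_NN bm bI gt)"
    using outage_integral_erlang_mixture(1)[OF _ _ _ _ bm bI gt q_eq, of 0 0]
    by (simp add: fNLoS_eq_erlang_mixture poisson_order_series_0_left)
  show "0 \<le> po_NN bm bI gt" using bm bI gt by (simp add: po_NN_def)
qed

section \<open>Splitting the outage event by environment\<close>

lemma outage_integral_cmult: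
  fixes f g :: "real \<Rightarrow> real"
  assumes [measurable]: "f \<in> borel_measurable borel" "g \<in> borel_measurable borel"
    and f: "\<And>x. 0 \<le> f x" and p: "0 \<le> p" and p': "0 \<le> p'"
  shows "outage_integral bm bI gt (\<lambda>u. p * f u) (\<lambda>v. p' * g v) = ennreal (p * p') * outage_integral bm bI gt f g"
proof -
  have inner: "(\<integral>\<^sup>+v. ennreal (p' * g v) * indicator {v. u * bm / (v * bI) < gt} v \<partial>lborel)
      = ennreal p' * (\<integral>\<^sup>+v. ennreal (g v) * indicator {v. u * bm / (v * bI) < gt} v \<partial>lborel)" for u
    using p' by (subst nn_integral_cmult[symmetric]) (measurable, simp add: ennreal_mult' mult.assoc)
  show ?thesis
    unfolding outage_integral_def inner using p p' f
    by (subst nn_integral_cmult[symmetric]) (measurable, simp add: ennreal_mult ennreal_mult' mult_ac)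
qed

lemma nn_integral_count_space_bool_lborel:
  assumes [measurable]: "f \<in> borel_measurable (count_space UNIV \<Otimes>\<^sub>M (lborel :: real measure))"
  shows "(\<integral>\<^sup>+z. f z \<partial>(count_space UNIV \<Otimes>\<^sub>M lborel)) = (\<integral>\<^sup>+h. f (True, h) \<partial>lborel) + (\<integral>\<^sup>+h. f (False, h) \<partial>lborel)"
proof -
  have "(\<integral>\<^sup>+z. f z \<partial>(count_space UNIV \<Otimes>\<^sub>M lborel)) = (\<integral>\<^sup>+e. \<integral>\<^sup>+h. f (e, h) \<partial>lborel \<partial>count_space UNIV)"
    by (rule lborel.nn_integral_fst[symmetric]) simp
  also have "\<dots> = (\<Sum>e\<in>UNIV. \<integral>\<^sup>+h. f (e, h) \<partial>lborel)"
    by (rule nn_integral_count_space_finite) simp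
  finally show ?thesis by (simp add: UNIV_bool)
qed

lemma emeasure_density_count_space_bool_lborel:
  assumes [measurable]: "g \<in> borel_measurable (count_space UNIV \<Otimes>\<^sub>M (lborel :: real measure))"
    and [measurable]: "A \<in> sets (count_space UNIV \<Otimes>\<^sub>M (lborel :: real measure))"
  shows "emeasure (density (count_space UNIV \<Otimes>\<^sub>M lborel) g) A
       = (\<integral>\<^sup>+h. g (True, h) * indicator A (True, h) \<partial>lborel) + (\<integral>\<^sup>+h. g (False, h) * indicator A (False, h) \<partial>lborel)"
  by (simp add: emeasure_density nn_integral_count_space_bool_lborel)

lemma ennreal_mult_set_integral_density:
  fixes f :: "real \<Rightarrow> real"
  assumes [measurable]: "f \<in> borel_measurable borel" "A \<in> sets borel"
    and f: "\<And>h. 0 \<le> f h" and total: "(\<integral>\<^sup>+h. ennreal (f h) \<partial>lborel) = 1" and p: "0 \<le> p"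
  shows "ennreal (p * (LINT h:A|lborel. f h)) = (\<integral>\<^sup>+h. ennreal (p * f h) * indicator A h \<partial>lborel)"
proof -
  have "(\<integral>\<^sup>+h. ennreal (f h) * indicator A h \<partial>lborel) \<le> (\<integral>\<^sup>+h. ennreal (f h) \<partial>lborel)"
    by (intro nn_integral_mono) (simp split: split_indicator)
  then have finite: "(\<integral>\<^sup>+h. ennreal (f h) * indicator A h \<partial>lborel) \<noteq> \<infinity>"
    using total by (auto simp: top_unique)
  have "(LINT h:A|lborel. f h) = enn2real (\<integral>\<^sup>+h. ennreal (indicator A h *\<^sub>R f h) \<partial>lborel)"
    unfolding set_lebesgue_integral_def using f by (intro integral_eq_nn_integral) auto
  also have "(\<integral>\<^sup>+h. ennreal (indicator A h *\<^sub>R f h) \<partial>lborel) = (\<integral>\<^sup>+h. ennreal (f h) * indicator A h \<partial>lborel)"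
    by (intro nn_integral_cong) (simp split: split_indicator)
  finally have "ennreal (p * (LINT h:A|lborel. f h)) = ennreal p * (\<integral>\<^sup>+h. ennreal (f h) * indicator A h \<partial>lborel)"
    using p finite by (simp add: ennreal_mult ennreal_enn2real_if)
  also have "\<dots> = (\<integral>\<^sup>+h. ennreal (p * f h) * indicator A h \<partial>lborel)"
    using p by (subst nn_integral_cmult[symmetric]) (measurable, simp add: ennreal_mult' mult.assoc)
  finally show ?thesis .
qed

lemma distr_environment_gain_eq_density:
  fixes h :: "'a \<Rightarrow> real" and f1 f0 :: "real \<Rightarrow> real"
  assumes "prob_space M"
    and [measurable]: "E \<in> measurable M (count_space UNIV)" "h \<in> borel_measurable M"
      "f1 \<in> borel_measurable borel" "f0 \<in> borel_measurable borel"
    and f1: "\<And>x. 0 \<le> f1 x" "(\<integral>\<^sup>+x. ennreal (f1 x) \<partial>lborel) = 1"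
    and f0: "\<And>x. 0 \<le> f0 x" "(\<integral>\<^sup>+x. ennreal (f0 x) \<partial>lborel) = 1"
    and p: "0 \<le> p" "p \<le> 1"
    and law1: "\<And>A. A \<in> sets borel \<Longrightarrow> measure M {x \<in> space M. E x \<and> h x \<in> A} = p * (LINT t:A|lborel. f1 t)"
    and law0: "\<And>A. A \<in> sets borel \<Longrightarrow> measure M {x \<in> space M. \<not> E x \<and> h x \<in> A} = (1 - p) * (LINT t:A|lborel. f0 t)"
  shows "distr M (count_space UNIV \<Otimes>\<^sub>M borel) (\<lambda>x. (E x, h x))
       = density (count_space UNIV \<Otimes>\<^sub>M lborel) (\<lambda>z. ennreal (if fst z then p * f1 (snd z) else (1 - p) * f0 (snd z)))"
    (is "?L = density ?N ?g")
proof (rule measure_eqI)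
  interpret prob_space M by fact
  have sN: "sets ?N = sets (count_space UNIV \<Otimes>\<^sub>M borel)"
    by (intro sets_pair_measure_cong) auto
  show "sets ?L = sets (density ?N ?g)" using sN by simp
  fix A assume "A \<in> sets ?L"
  then have A[measurable]: "A \<in> sets (count_space UNIV \<Otimes>\<^sub>M borel)" by simp
  have AT[measurable]: "Pair True -` A \<in> sets borel" and AF[measurable]: "Pair False -` A \<in> sets borel"
    using A by (auto intro!: measurable_sets[OF measurable_Pair2'])
  have "emeasure ?L A = emeasure M ((\<lambda>x. (E x, h x)) -` A \<inter> space M)"
    by (rule emeasure_distr) simp_all
  also have "(\<lambda>x. (E x, h x)) -` A \<inter> space M
     = {x \<in> space M. E x \<and> h x \<in> Pair True -` A} \<union> {x \<in> space M. \<not> E x \<and> h x \<in> Pair False -` A}"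
    by (rule set_eqI) (case_tac "E x"; auto)
  also have "emeasure M \<dots> = emeasure M {x \<in> space M. E x \<and> h x \<in> Pair True -` A}
      + emeasure M {x \<in> space M. \<not> E x \<and> h x \<in> Pair False -` A}"
    by (rule plus_emeasure[symmetric]) auto
  also have "\<dots> = ennreal (p * (LINT t:Pair True -` A|lborel. f1 t)) + ennreal ((1 - p) * (LINT t:Pair False -` A|lborel. f0 t))"
    by (simp only: emeasure_eq_measure law1[OF AT] law0[OF AF])
  also have "\<dots> = (\<integral>\<^sup>+t. ?g (True, t) * indicator A (True, t) \<partial>lborel)
      + (\<integral>\<^sup>+t. ?g (False, t) * indicator A (False, t) \<partial>lborel)"
    using p f1 f0 by (simp add: ennreal_mult_set_integral_density indicator_def)
  also have "\<dots> = emeasure (density ?N ?g) A"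
    using A sN by (intro emeasure_density_count_space_bool_lborel[symmetric]) (simp_all add: measurable_cong_sets[OF sN refl])
  finally show "emeasure ?L A = emeasure (density ?N ?g) A" .
qed

lemma (in prob_space) emeasure_indep_var_vimage:
  assumes indep: "indep_var N1 X N2 Y"
    and [measurable]: "X \<in> measurable M N1" "Y \<in> measurable M N2" "B \<in> sets (N1 \<Otimes>\<^sub>M N2)"
    and law_X: "distr M N1 X = density L f" and sets_L: "sets L = sets N1" and f: "f \<in> borel_measurable L"
  shows "emeasure M ((\<lambda>x. (X x, Y x)) -` B \<inter> space M)
       = (\<integral>\<^sup>+x. f x * emeasure (distr M N2 Y) (Pair x -` B) \<partial>L)"
proof -
  interpret Y: prob_space "distr M N2 Y" by (rule prob_space_distr) measurable
  have "sets (N1 \<Otimes>\<^sub>M distr M N2 Y) = sets (N1 \<Otimes>\<^sub>M N2)" by (rule sets_pair_measure_cong) simp_all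
  then have "(\<lambda>x. emeasure (distr M N2 Y) (Pair x -` B)) \<in> borel_measurable L"
    using Y.measurable_emeasure_Pair[of B N1] by (simp add: measurable_cong_sets[OF sets_L refl])
  have "emeasure M ((\<lambda>x. (X x, Y x)) -` B \<inter> space M) = emeasure (distr M (N1 \<Otimes>\<^sub>M N2) (\<lambda>x. (X x, Y x))) B"
    by (rule emeasure_distr[symmetric]) measurable
  also have "distr M (N1 \<Otimes>\<^sub>M N2) (\<lambda>x. (X x, Y x)) = distr M N1 X \<Otimes>\<^sub>M distr M N2 Y"
    using indep_var_distribution_eq[THEN iffD1, OF indep] by simp
  also have "emeasure \<dots> B = (\<integral>\<^sup>+x. emeasure (distr M N2 Y) (Pair x -` B) \<partial>distr M N1 X)"
    by (simp add: Y.emeasure_pair_measure_alt)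
  finally show ?thesis
    unfolding law_X using f \<open>(\<lambda>x. emeasure (distr M N2 Y) (Pair x -` B)) \<in> borel_measurable L\<close>
    by (simp add: nn_integral_density)
qed

lemma nn_integral_environment_sum:
  fixes f1 f0 :: "real \<Rightarrow> real" and I :: "bool \<Rightarrow> real \<Rightarrow> ennreal"
  assumes [measurable]: "f1 \<in> borel_measurable borel" "f0 \<in> borel_measurable borel"
    "\<And>b. I b \<in> borel_measurable borel"
  shows "(\<integral>\<^sup>+z. ennreal (if fst z then f1 (snd z) else f0 (snd z))
            * (\<Sum>b\<in>UNIV. if P (fst z) b then I b (snd z) else 0) \<partial>(count_space UNIV \<Otimes>\<^sub>M lborel))
       = (\<Sum>a\<in>UNIV. \<Sum>b\<in>UNIV. if P a b then (\<integral>\<^sup>+u. ennreal (if a then f1 u else f0 u) * I b u \<partial>lborel) else 0)"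
proof -
  have H: "(\<lambda>z. ennreal (if fst z then f1 (snd z) else f0 (snd z)) * (\<Sum>b\<in>UNIV. if P (fst z) b then I b (snd z) else 0))
      \<in> borel_measurable (count_space UNIV \<Otimes>\<^sub>M lborel)"
    by measurable
  have slice: "(\<integral>\<^sup>+u. ennreal (if fst (a, u) then f1 (snd (a, u)) else f0 (snd (a, u)))
        * (\<Sum>b\<in>UNIV. if P (fst (a, u)) b then I b (snd (a, u)) else 0) \<partial>lborel)
      = (\<Sum>b\<in>UNIV. if P a b then (\<integral>\<^sup>+u. ennreal (if a then f1 u else f0 u) * I b u \<partial>lborel) else 0)" for a
  proof -
    have "(\<integral>\<^sup>+u. ennreal (if fst (a, u) then f1 (snd (a, u)) else f0 (snd (a, u)))
        * (\<Sum>b\<in>UNIV. if P (fst (a, u)) b then I b (snd (a, u)) else 0) \<partial>lborel)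
        = (\<integral>\<^sup>+u. (\<Sum>b\<in>UNIV. if P a b then ennreal (if a then f1 u else f0 u) * I b u else 0) \<partial>lborel)"
      by (intro nn_integral_cong) (auto simp: sum_distrib_left intro!: sum.cong)
    also have "\<dots> = (\<Sum>b\<in>UNIV. \<integral>\<^sup>+u. (if P a b then ennreal (if a then f1 u else f0 u) * I b u else 0) \<partial>lborel)"
      by (rule nn_integral_sum) measurable
    finally show ?thesis by (auto intro!: sum.cong)
  qed
  show ?thesis
    unfolding nn_integral_count_space_bool_lborel[OF H] slice by (simp add: UNIV_bool add.commute)
qed

lemma emeasure_outage_by_environment:
  fixes M :: "'a measure" and Em EI :: "'a \<Rightarrow> bool" and hm hI :: "'a \<Rightarrow> real"
    and f1 f0 g1 g0 :: "real \<Rightarrow> real" and P :: "bool \<Rightarrow> bool \<Rightarrow> bool"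
  assumes "prob_space M"
    and [measurable]: "Em \<in> measurable M (count_space UNIV)" "EI \<in> measurable M (count_space UNIV)"
      "hm \<in> borel_measurable M" "hI \<in> borel_measurable M"
    and indep: "prob_space.indep_var M
                  (count_space UNIV \<Otimes>\<^sub>M borel) (\<lambda>x. (Em x, hm x))
                  (count_space UNIV \<Otimes>\<^sub>M borel) (\<lambda>x. (EI x, hI x))"
    and [measurable]: "f1 \<in> borel_measurable borel" "f0 \<in> borel_measurable borel"
      "g1 \<in> borel_measurable borel" "g0 \<in> borel_measurable borel"
    and law_m: "distr M (count_space UNIV \<Otimes>\<^sub>M borel) (\<lambda>x. (Em x, hm x))
       = density (count_space UNIV \<Otimes>\<^sub>M lborel) (\<lambda>z. ennreal (if fst z then f1 (snd z) else f0 (snd z)))"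
    and law_I: "distr M (count_space UNIV \<Otimes>\<^sub>M borel) (\<lambda>x. (EI x, hI x))
       = density (count_space UNIV \<Otimes>\<^sub>M lborel) (\<lambda>z. ennreal (if fst z then g1 (snd z) else g0 (snd z)))"
  shows "emeasure M {x \<in> space M. P (Em x) (EI x) \<and> hm x * bm / (hI x * bI) < gt}
     = (\<Sum>a\<in>UNIV. \<Sum>b\<in>UNIV. if P a b then
          outage_integral bm bI gt (\<lambda>u. if a then f1 u else f0 u) (\<lambda>v. if b then g1 v else g0 v) else 0)"
proof -
  interpret prob_space M by fact
  let ?S = "count_space (UNIV :: bool set) \<Otimes>\<^sub>M (borel :: real measure)"
  let ?N = "count_space (UNIV :: bool set) \<Otimes>\<^sub>M (lborel :: real measure)"
  have sN: "sets ?N = sets ?S" by (intro sets_pair_measure_cong) auto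
  let ?G1 = "\<lambda>z. ennreal (if fst z then f1 (snd z) else f0 (snd z))"
  define I where "I b u = (\<integral>\<^sup>+v. ennreal (if b then g1 v else g0 v) * indicator {v. u * bm / (v * bI) < gt} v \<partial>lborel)"
    for b u
  define B where "B = {z \<in> space (?S \<Otimes>\<^sub>M ?S). P (fst (fst z)) (fst (snd z)) \<and> snd (fst z) * bm / (snd (snd z) * bI) < gt}"
  have B[measurable]: "B \<in> sets (?S \<Otimes>\<^sub>M ?S)"
    unfolding B_def by measurable
  have B_slice: "emeasure (distr M ?S (\<lambda>x. (EI x, hI x))) (Pair z -` B) = (\<Sum>b\<in>UNIV. if P (fst z) b then I b (snd z) else 0)"
    for z :: "bool \<times> real"
  proof -
    have "Pair z -` B \<in> sets ?N"
      using sN measurable_Pair2[of "\<lambda>z. z" "?S \<Otimes>\<^sub>M ?S" ?S, OF measurable_ident_sets] B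
      by (auto intro!: sets_Pair1)
    then have "emeasure (distr M ?S (\<lambda>x. (EI x, hI x))) (Pair z -` B)
        = (\<integral>\<^sup>+v. ennreal (g1 v) * indicator (Pair z -` B) (True, v) \<partial>lborel)
          + (\<integral>\<^sup>+v. ennreal (g0 v) * indicator (Pair z -` B) (False, v) \<partial>lborel)"
      unfolding law_I by (subst emeasure_density_count_space_bool_lborel) (simp_all add: measurable_cong_sets[OF sN refl])
    then show ?thesis
      by (cases z) (simp add: UNIV_bool B_def I_def space_pair_measure indicator_def)
  qed
  have G1: "?G1 \<in> borel_measurable ?N"
    unfolding measurable_cong_sets[OF sN refl] by measurable
  have "emeasure M {x \<in> space M. P (Em x) (EI x) \<and> hm x * bm / (hI x * bI) < gt}
      = emeasure M ((\<lambda>x. ((Em x, hm x), (EI x, hI x))) -` B \<inter> space M)"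
    by (intro arg_cong[where f="emeasure M"]) (auto simp: B_def space_pair_measure)
  also have "\<dots> = (\<integral>\<^sup>+z. ?G1 z * (\<Sum>b\<in>UNIV. if P (fst z) b then I b (snd z) else 0) \<partial>?N)"
    unfolding B_slice[symmetric]
    by (rule emeasure_indep_var_vimage[OF indep _ _ B law_m sN G1]; measurable)
  also have "\<dots> = (\<Sum>a\<in>UNIV. \<Sum>b\<in>UNIV. if P a b then (\<integral>\<^sup>+u. ennreal (if a then f1 u else f0 u) * I b u \<partial>lborel) else 0)"
    by (rule nn_integral_environment_sum) (simp_all add: I_def)
  finally show ?thesis
    unfolding outage_integral_def I_def by simp
qed

lemma distr_fading_eq_density:
  fixes h :: "'a \<Rightarrow> real"
  assumes M: "prob_space M" and E: "E \<in> measurable M (count_space UNIV)" and h: "h \<in> borel_measurable M"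
    and K: "0 < K" and p: "0 \<le> p" "p \<le> 1"
    and law1: "\<And>A. A \<in> sets borel \<Longrightarrow> measure M {x \<in> space M. E x \<and> h x \<in> A} = p * (LINT t:A|lborel. fLoS K t)"
    and law0: "\<And>A. A \<in> sets borel \<Longrightarrow> measure M {x \<in> space M. \<not> E x \<and> h x \<in> A} = (1 - p) * (LINT t:A|lborel. fNLoS t)"
  shows "distr M (count_space UNIV \<Otimes>\<^sub>M borel) (\<lambda>x. (E x, h x)) = density (count_space UNIV \<Otimes>\<^sub>M lborel)
      (\<lambda>z. ennreal (if fst z then p * fLoS K (snd z) else (1 - p) * fNLoS (snd z)))"
  using K
  by (intro distr_environment_gain_eq_density[OF M E h fLoS_measurable fNLoS_measurable _ _ _ _ p law1 law0])
    (simp_all add: fLoS_nonneg fNLoS_nonneg nn_integral_fLoS nn_integral_fNLoS)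

lemma measure_eq_sum_bool_ennreal:
  fixes w :: "bool \<Rightarrow> bool \<Rightarrow> real"
  assumes "emeasure M A = (\<Sum>a\<in>UNIV. \<Sum>b\<in>UNIV. if P a b then ennreal (w a b) else 0)" and "\<And>a b. 0 \<le> w a b"
  shows "measure M A = (\<Sum>a\<in>UNIV. \<Sum>b\<in>UNIV. if P a b then w a b else 0)"
  using assms by (intro measure_eq_emeasure_eq_ennreal) (simp_all add: sum_nonneg UNIV_bool flip: ennreal_plus)

definition conditional_outage :: "real \<Rightarrow> real \<Rightarrow> real \<Rightarrow> real \<Rightarrow> real \<Rightarrow> bool \<Rightarrow> bool \<Rightarrow> real" where
  "conditional_outage bm bI gt Km KI a b =
     (if a then if b then po_LL bm bI gt Km KI else po_LN bm bI gt Km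
      else if b then po_NL bm bI gt KI else po_NN bm bI gt)"

lemma outage_integral_environment:
  assumes pos: "0 < bm" "0 < bI" "0 < gt" "0 < Km" "0 < KI" and p: "0 \<le> pm" "pm \<le> 1" "0 \<le> pI" "pI \<le> 1"
  shows "outage_integral bm bI gt (\<lambda>u. if a then pm * fLoS Km u else (1 - pm) * fNLoS u)
      (\<lambda>v. if b then pI * fLoS KI v else (1 - pI) * fNLoS v)
      = ennreal ((if a then pm else 1 - pm) * (if b then pI else 1 - pI) * conditional_outage bm bI gt Km KI a b)"
    and "0 \<le> (if a then pm else 1 - pm) * (if b then pI else 1 - pI) * conditional_outage bm bI gt Km KI a b"
proof -
  have "0 \<le> conditional_outage bm bI gt Km KI a b"
    using outage_integral_LoS_LoS(2) outage_integral_LoS_NLoS(2) outage_integral_NLoS_LoS(2)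
      outage_integral_NLoS_NLoS(2) pos
    by (simp add: conditional_outage_def)
  then show "0 \<le> (if a then pm else 1 - pm) * (if b then pI else 1 - pI) * conditional_outage bm bI gt Km KI a b"
    using p by simp
  show "outage_integral bm bI gt (\<lambda>u. if a then pm * fLoS Km u else (1 - pm) * fNLoS u)
      (\<lambda>v. if b then pI * fLoS KI v else (1 - pI) * fNLoS v)
      = ennreal ((if a then pm else 1 - pm) * (if b then pI else 1 - pI) * conditional_outage bm bI gt Km KI a b)"
    using p pos
    by (cases a; cases b)
      (simp_all add: conditional_outage_def outage_integral_cmult fLoS_nonneg fNLoS_nonneg outage_integral_LoS_LoS
        outage_integral_LoS_NLoS outage_integral_NLoS_LoS outage_integral_NLoS_NLoS flip: ennreal_mult)
qed

theorem theorem1: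
  fixes M :: "'a measure"
    and Em EI :: "'a \<Rightarrow> bool" \<comment> \<open>True = link in LoS environment\<close>
    and hm hI :: "'a \<Rightarrow> real"
    and bm bI gt pm pI Km KI :: real
  assumes "prob_space M"
    and "bm > 0" "bI > 0" "gt > 0"
    and "0 \<le> pm" "pm \<le> 1" "0 \<le> pI" "pI \<le> 1"
    and "Km > 0" "KI > 0"
    and "Em \<in> measurable M (count_space UNIV)" "EI \<in> measurable M (count_space UNIV)"
    and "hm \<in> borel_measurable M" "hI \<in> borel_measurable M"
    and indep: "prob_space.indep_var M
                  (count_space UNIV \<Otimes>\<^sub>M borel) (\<lambda>x. (Em x, hm x))
                  (count_space UNIV \<Otimes>\<^sub>M borel) (\<lambda>x. (EI x, hI x))"
    and lawmL: "\<And>A. A \<in> sets borel \<Longrightarrow>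
       measure M {x \<in> space M. Em x \<and> hm x \<in> A} = pm * (LINT h:A|lborel. fLoS Km h)"
    and lawmN: "\<And>A. A \<in> sets borel \<Longrightarrow>
       measure M {x \<in> space M. \<not> Em x \<and> hm x \<in> A} = (1 - pm) * (LINT h:A|lborel. fNLoS h)"
    and lawIL: "\<And>A. A \<in> sets borel \<Longrightarrow>
       measure M {x \<in> space M. EI x \<and> hI x \<in> A} = pI * (LINT h:A|lborel. fLoS KI h)"
    and lawIN: "\<And>A. A \<in> sets borel \<Longrightarrow>
       measure M {x \<in> space M. \<not> EI x \<and> hI x \<in> A} = (1 - pI) * (LINT h:A|lborel. fNLoS h)"
  shows
    "let out = {x \<in> space M. hm x * bm / (hI x * bI) < gt} in
       measure M out =
           pm * pI * po_LL bm bI gt Km KI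
         + pm * (1 - pI) * po_LN bm bI gt Km
         + (1 - pm) * pI * po_NL bm bI gt KI
         + (1 - pm) * (1 - pI) * po_NN bm bI gt
     \<and> measure M {x \<in> out. Em x \<and> EI x} = pm * pI * po_LL bm bI gt Km KI
     \<and> measure M {x \<in> out. Em x \<and> \<not> EI x} = pm * (1 - pI) * po_LN bm bI gt Km
     \<and> measure M {x \<in> out. \<not> Em x \<and> EI x} = (1 - pm) * pI * po_NL bm bI gt KI
     \<and> measure M {x \<in> out. \<not> Em x \<and> \<not> EI x} = (1 - pm) * (1 - pI) * po_NN bm bI gt"
proof -
  interpret prob_space M by fact
  have pos: "0 < bm" "0 < bI" "0 < gt" "0 < Km" "0 < KI" and p: "0 \<le> pm" "pm \<le> 1" "0 \<le> pI" "pI \<le> 1"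
    using assms(2-10) by auto
  define w where "w a b = (if a then pm else 1 - pm) * (if b then pI else 1 - pI) * conditional_outage bm bI gt Km KI a b"
    for a b
  note law_m = distr_fading_eq_density[OF assms(1,11,13) pos(4) p(1,2) lawmL lawmN]
  note law_I = distr_fading_eq_density[OF assms(1,12,14) pos(5) p(3,4) lawIL lawIN]
  have densities_measurable: "(\<lambda>u. pm * fLoS Km u) \<in> borel_measurable borel" "(\<lambda>u. (1 - pm) * fNLoS u) \<in> borel_measurable borel"
    "(\<lambda>v. pI * fLoS KI v) \<in> borel_measurable borel" "(\<lambda>v. (1 - pI) * fNLoS v) \<in> borel_measurable borel"
    by simp_all
  have split: "measure M {x \<in> space M. P (Em x) (EI x) \<and> hm x * bm / (hI x * bI) < gt}
      = (\<Sum>a\<in>UNIV. \<Sum>b\<in>UNIV. if P a b then w a b else 0)" for P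
  proof (rule measure_eq_sum_bool_ennreal)
    show "emeasure M {x \<in> space M. P (Em x) (EI x) \<and> hm x * bm / (hI x * bI) < gt}
        = (\<Sum>a\<in>UNIV. \<Sum>b\<in>UNIV. if P a b then ennreal (w a b) else 0)"
      unfolding w_def outage_integral_environment(1)[OF pos p, symmetric]
      by (rule emeasure_outage_by_environment[OF assms(1) assms(11-14) indep densities_measurable law_m law_I])
  qed (unfold w_def, rule outage_integral_environment(2)[OF pos p])
  show ?thesis
    using split[of "\<lambda>a b. True"] split[of "\<lambda>a b. a \<and> b"] split[of "\<lambda>a b. a \<and> \<not> b"]
      split[of "\<lambda>a b. \<not> a \<and> b"] split[of "\<lambda>a b. \<not> a \<and> \<not> b"]
    by (simp add: Let_def UNIV_bool w_def conditional_outage_def conj_commute conj_left_commute)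
qed

end
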